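(* Let $G$ be a planar trivalent graph and let $M$ be a perfect matching of $G$. Then $$\langle G:M\rangle_2(1) = |G:M|_2,$$ i.e. the $2$-factor polynomial of $(G,M)$ evaluated at $z=1$ equals the number of $2$-factors of $G$ that contain every edge of $M$.
   Context: Graphs are finite and may have multiple edges; a trivalent graph is one in which every vertex has degree $3$. A $2$-factor of $G$ is a spanning subgraph in which every vertex has degree $2$. Write $[G:M]_2$ for the set of $2$-factors of $G$ containing $M$ as a subgraph, and $|G:M|_2$ for its cardinality. The $2$-factor polynomial is defined as follows. A perfect matching drawing $\Gamma$ is a collection of trivalent vertices, edges and vertex-free closed curves drawn in the $2$-sphere by a generic immersion (edges and curves may cross transversally at finitely many double points away from vertices; crossings carry no extra data), together with a set $M$ of edges forming a perfect matching of the vertices. For a matching edge $e=uv$, let $\alpha,\beta$ be the other two edge-ends at $u$ and $\gamma,\delta$ the other two edge-ends at $v$, labelled so that in a small disk around $e$ the four edge-ends appear in the cyclic order $\alpha,\beta,\delta,\gamma$. The $0$-resolution at $e$ deletes $e,u,v$ and joins $\alpha$ to $\gamma$ and $\beta$ to $\delta$ by two disjoint arcs inside the disk; the $1$-resolution instead joins $\alpha$ to $\delta$ and $\beta$ to $\gamma$ by two arcs crossing once. A state $s$ assigns $0$ or $1$ to every edge of $M$; performing the corresponding resolutions at all matching edges gives a collection of $c(s)$ immersed closed curves. The $2$-factor bracket is $$\langle \Gamma\rangle_2(z)=\sum_{s}(-z)^{|s|}(z+z^{-1})^{c(s)}\in\mathbb{Z}[z,z^{-1}],$$ where $|s|$ is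 the number of edges assigned $1$. Equivalently, $\langle\Gamma\rangle_2=\langle\Gamma_0\rangle_2-z\langle\Gamma_1\rangle_2$ for the $0$- and $1$-resolutions $\Gamma_0,\Gamma_1$ at any matching edge, each vertex-free closed curve contributes a factor $z+z^{-1}$, and the bracket is multiplicative under disjoint union. For a planar trivalent graph $G$ with perfect matching $M$, the $2$-factor polynomial $\langle G:M\rangle_2(z)$ is $\langle\Gamma\rangle_2(z)$ for any embedding $\Gamma$ of $G$ in the $2$-sphere with the edges of $M$ marked (this does not depend on the embedding). *)

theory Defs
  imports Complex_Main
begin

text \<open>Graphs with multiple edges and loops are encoded by half-edges (darts):
  H is the finite set of darts, alpha the fixed-point-free involution pairing
  the two darts of an edge, vert d the vertex at which dart d is attached.\<close>

definition half_edge_graph :: "'d set \<Rightarrow> ('d \<Rightarrow> 'd) \<Rightarrow> bool" where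
  "half_edge_graph H alpha \<longleftrightarrow> finite H \<and>
     (\<forall>d\<in>H. alpha d \<in> H \<and> alpha d \<noteq> d \<and> alpha (alpha d) = d)"

definition darts_at :: "'d set \<Rightarrow> ('d \<Rightarrow> 'v) \<Rightarrow> 'v \<Rightarrow> 'd set" where
  "darts_at H vert v = {d \<in> H. vert d = v}"

definition graph_edges :: "'d set \<Rightarrow> ('d \<Rightarrow> 'd) \<Rightarrow> 'd set set" where
  "graph_edges H alpha = {{d, alpha d} | d. d \<in> H}"

text \<open>Degree of vertex v in the spanning subgraph with edge set F (a loop counts twice).\<close>
definition sub_degree :: "'d set set \<Rightarrow> ('d \<Rightarrow> 'v) \<Rightarrow> 'v \<Rightarrow> nat" where
  "sub_degree F vert v = card (darts_at (\<Union>F) vert v)"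

definition trivalent :: "'d set \<Rightarrow> ('d \<Rightarrow> 'v) \<Rightarrow> bool" where
  "trivalent H vert \<longleftrightarrow> (\<forall>v\<in>vert ` H. card (darts_at H vert v) = 3)"

definition perfect_matching :: "'d set \<Rightarrow> ('d \<Rightarrow> 'd) \<Rightarrow> ('d \<Rightarrow> 'v) \<Rightarrow> 'd set set \<Rightarrow> bool" where
  "perfect_matching H alpha vert M \<longleftrightarrow> M \<subseteq> graph_edges H alpha \<and>
     (\<forall>v\<in>vert ` H. sub_degree M vert v = 1)"

definition two_factors_containing :: "'d set \<Rightarrow> ('d \<Rightarrow> 'd) \<Rightarrow> ('d \<Rightarrow> 'v) \<Rightarrow> 'd set set \<Rightarrow> 'd set set set" where
  "two_factors_containing H alpha vert M =
     {F. F \<subseteq> graph_edges H alpha \<and> (\<forall>v\<in>vert ` H. sub_degree F vert v = 2) \<and> M \<subseteq> F}"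

text \<open>Embeddings in the sphere are encoded combinatorially by rotation systems:
  sigma maps each dart to the next dart counterclockwise around its vertex.\<close>
definition rotation_system :: "'d set \<Rightarrow> ('d \<Rightarrow> 'v) \<Rightarrow> ('d \<Rightarrow> 'd) \<Rightarrow> bool" where
  "rotation_system H vert sigma \<longleftrightarrow> bij_betw sigma H H \<and>
     (\<forall>d\<in>H. {(sigma ^^ n) d | n. True} = darts_at H vert (vert d))"

definition perm_orbits :: "'d set \<Rightarrow> ('d \<Rightarrow> 'd) \<Rightarrow> 'd set set" where
  "perm_orbits H f = {{(f ^^ n) d | n. True} | d. d \<in> H}"

definition map_components :: "'d set \<Rightarrow> ('d \<Rightarrow> 'd) \<Rightarrow> ('d \<Rightarrow> 'd) \<Rightarrow> 'd set set" where
  "map_components H alpha sigma =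
     H // (({(d, alpha d) | d. d \<in> H} \<union> {(alpha d, d) | d. d \<in> H}
           \<union> {(d, sigma d) | d. d \<in> H} \<union> {(sigma d, d) | d. d \<in> H})\<^sup>*)"

text \<open>Planar (genus 0) rotation system: Euler's formula V - E + F = 2 on every
  connected component, i.e. V - E + F = 2 * (number of components); faces are the
  orbits of sigma o alpha.\<close>
definition planar_rotation_system :: "'d set \<Rightarrow> ('d \<Rightarrow> 'd) \<Rightarrow> ('d \<Rightarrow> 'v) \<Rightarrow> ('d \<Rightarrow> 'd) \<Rightarrow> bool" where
  "planar_rotation_system H alpha vert sigma \<longleftrightarrow> rotation_system H vert sigma \<and>
     int (card (vert ` H)) - int (card (graph_edges H alpha))
       + int (card (perm_orbits H (sigma \<circ> alpha)))
     = 2 * int (card (map_components H alpha sigma))"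

text \<open>For a non-matching dart d at vertex u, let m be
  the matching dart at u and m' = alpha m the matching dart at the other end v.
  With alpha = sigma m, beta = sigma^2 m, delta = sigma m', gamma = sigma^2 m'
  (cyclic order alpha, beta, delta, gamma around the edge), the 0-resolution
  joins alpha-gamma and beta-delta, the 1-resolution alpha-delta and beta-gamma.
  S is the set of matching edges assigned 1.\<close>
definition res_partner :: "('d \<Rightarrow> 'd) \<Rightarrow> ('d \<Rightarrow> 'v) \<Rightarrow> ('d \<Rightarrow> 'd) \<Rightarrow> 'd set set \<Rightarrow> 'd set set \<Rightarrow> 'd \<Rightarrow> 'd" where
  "res_partner alpha vert sigma M S d =
     (let m = (THE m. m \<in> \<Union>M \<and> vert m = vert d); m' = alpha m; b = ({m, m'} \<in> S) in
      if d = sigma m then (if b then sigma m' else sigma (sigma m'))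
      else (if b then sigma (sigma m') else sigma m'))"

text \<open>Number c(s) of closed curves of the state S: connected components of the
  non-matching darts linked by the remaining edges and by the resolution arcs.\<close>
definition num_curves :: "'d set \<Rightarrow> ('d \<Rightarrow> 'd) \<Rightarrow> ('d \<Rightarrow> 'v) \<Rightarrow> ('d \<Rightarrow> 'd) \<Rightarrow> 'd set set \<Rightarrow> 'd set set \<Rightarrow> nat" where
  "num_curves H alpha vert sigma M S =
     (let N = H - \<Union>M; r = res_partner alpha vert sigma M S in
      card (N // (({(d, alpha d) | d. d \<in> N} \<union> {(alpha d, d) | d. d \<in> N}
                  \<union> {(d, r d) | d. d \<in> N} \<union> {(r d, d) | d. d \<in> N})\<^sup>*)))"

definition two_factor_bracket :: "'d set \<Rightarrow> ('d \<Rightarrow> 'd) \<Rightarrow> ('d \<Rightarrow> 'v) \<Rightarrow> ('d \<Rightarrow> 'd) \<Rightarrow> 'd set set \<Rightarrow> real \<Rightarrow> real" where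
  "two_factor_bracket H alpha vert sigma M z =
     (\<Sum>S\<in>Pow M. (- z) ^ card S * (z + inverse z) ^ num_curves H alpha vert sigma M S)"

end

theory Submission
  imports Defs
begin

text \<open>At \<open>z = 1\<close> a state \<open>s\<close> has weight \<open>(-1)^|s| 2^c(s)\<close>, and \<open>2^c(s)\<close> counts the
  two-colourings of the unmatched darts that are constant on every curve of \<open>s\<close>.  Summing over
  the states first, the two resolutions at a matching edge cancel unless the colouring separates
  the two unmatched darts at each end of the edge, in which case they contribute a sign.  The
  colourings that separate at every matching edge are exactly the two-factors containing \<open>M\<close>
  (the darts coloured True together with \<open>M\<close>), so it remains to see that every sign is \<open>+1\<close>.

  A two-factor is an even subgraph, so in a planar map it bounds a set of faces: there is a
  two-colouring of the face corners that changes exactly across the two-factor.  Comparing these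
  colours on both sides of a matching edge writes the sign as a product over the darts outside the
  two-factor, and those come in pairs of equal colour.  The face colouring is a section of the
  double cover of the map that switches sheets along the two-factor; Euler's inequality for the
  cover together with Euler's formula for the map shows that the cover has twice as many
  components as the map, hence is trivial.\<close>

section \<open>Components of relations\<close>

definition equivcl :: "('a \<times> 'a) set \<Rightarrow> ('a \<times> 'a) set" where
  "equivcl R = (R \<union> R\<inverse>)\<^sup>*"

definition num_components :: "'a set \<Rightarrow> ('a \<times> 'a) set \<Rightarrow> nat" where
  "num_components A R = card (A // equivcl R)"

definition graph_on :: "'a set \<Rightarrow> ('a \<Rightarrow> 'a) \<Rightarrow> ('a \<times> 'a) set" where
  "graph_on A f = {(x, f x) | x. x \<in> A}"

lemma in_graph_on [simp]: "(x, y) \<in> graph_on A f \<longleftrightarrow> x \<in> A \<and> y = f x"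
  by (auto simp: graph_on_def)

lemma graph_on_cong: "(\<And>x. x \<in> A \<Longrightarrow> f x = g x) \<Longrightarrow> graph_on A f = graph_on A g"
  by (auto simp: graph_on_def)

lemma equiv_equivcl: "equiv UNIV (equivcl R)"
  unfolding equivcl_def
  by (intro equivI refl_rtrancl sym_rtrancl trans_rtrancl) (auto simp: sym_Un_converse)

lemma equivcl_refl [simp]: "(x, x) \<in> equivcl R"
  by (simp add: equivcl_def)

lemma equivcl_sym: "(x, y) \<in> equivcl R \<Longrightarrow> (y, x) \<in> equivcl R"
  using equiv_equivcl[of R] unfolding equiv_def by (blast dest: symD)

lemma equivcl_trans [trans]: "(x, y) \<in> equivcl R \<Longrightarrow> (y, z) \<in> equivcl R \<Longrightarrow> (x, z) \<in> equivcl R"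
  using equiv_equivcl[of R] unfolding equiv_def by (blast dest: transD)

lemma r_into_equivcl: "(x, y) \<in> R \<Longrightarrow> (x, y) \<in> equivcl R"
  by (auto simp: equivcl_def)

lemma converse_r_into_equivcl: "(y, x) \<in> R \<Longrightarrow> (x, y) \<in> equivcl R"
  by (auto simp: equivcl_def)

lemma equivcl_induct [consumes 1, case_names base step]:
  assumes "(x, y) \<in> equivcl R"
    and "P x"
    and "\<And>y z. (x, y) \<in> equivcl R \<Longrightarrow> (y, z) \<in> R \<or> (z, y) \<in> R \<Longrightarrow> P y \<Longrightarrow> P z"
  shows "P y"
  using assms(1) unfolding equivcl_def
proof (induction rule: rtrancl_induct)
  case (step y z)
  then show ?case using assms(3)[of y z] by (auto simp: equivcl_def)
qed (rule assms(2))

lemma equivcl_least: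
  assumes "R \<subseteq> E" and "equiv UNIV E"
  shows "equivcl R \<subseteq> E"
proof
  fix p assume "p \<in> equivcl R"
  moreover obtain x y where p: "p = (x, y)" by fastforce
  ultimately have "(x, y) \<in> equivcl R" by simp
  then have "(x, y) \<in> E"
  proof (induction rule: equivcl_induct)
    case base show ?case using assms(2) by (auto elim: equivE dest: refl_onD)
  next
    case (step y z)
    then show ?case using assms unfolding equiv_def by (blast dest: symD transD)
  qed
  then show "p \<in> E" using p by simp
qed

lemma equivcl_subset: "R \<subseteq> equivcl S \<Longrightarrow> equivcl R \<subseteq> equivcl S"
  using equivcl_least equiv_equivcl by blast

lemma equivcl_mono: "R \<subseteq> S \<Longrightarrow> equivcl R \<subseteq> equivcl S"
  using equivcl_subset r_into_equivcl by (metis subset_iff surj_pair)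

lemma equivcl_eqI: "R \<subseteq> equivcl S \<Longrightarrow> S \<subseteq> equivcl R \<Longrightarrow> equivcl R = equivcl S"
  using equivcl_subset by blast

lemma equivcl_closed:
  assumes "R \<subseteq> A \<times> A" and "(x, y) \<in> equivcl R" and "x \<in> A"
  shows "y \<in> A"
  using assms(2) by (induction rule: equivcl_induct) (use assms in auto)

lemma equivcl_map:
  assumes "\<And>x y. (x, y) \<in> R \<Longrightarrow> (h x, h y) \<in> equivcl S" and "(x, y) \<in> equivcl R"
  shows "(h x, h y) \<in> equivcl S"
  using assms(2)
proof (induction rule: equivcl_induct)
  case (step y z)
  then show ?case using assms(1) by (meson equivcl_sym equivcl_trans)
qed simp

lemma equivcl_class_eq_iff: "equivcl R `` {x} = equivcl R `` {y} \<longleftrightarrow> (x, y) \<in> equivcl R"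
  by (metis equiv_class_eq_iff[OF equiv_equivcl] UNIV_I)

lemma quotient_equivcl: "A // equivcl R = (\<lambda>x. equivcl R `` {x}) ` A"
  unfolding quotient_def by blast

lemma equivcl_insert_connected:
  assumes "(a, b) \<in> equivcl R"
  shows "equivcl (insert (a, b) R) = equivcl R"
proof (rule equivcl_eqI)
  show "insert (a, b) R \<subseteq> equivcl R" using assms by (auto intro: r_into_equivcl)
  show "R \<subseteq> equivcl (insert (a, b) R)" by (auto intro: r_into_equivcl)
qed

lemma equivcl_insert_merge:
  fixes R :: "('a \<times> 'a) set" and a b :: 'a
  defines "U \<equiv> equivcl R `` {a} \<union> equivcl R `` {b}"
  shows "equivcl (insert (a, b) R) = equivcl R \<union> U \<times> U"
proof
  let ?E = "equivcl R \<union> U \<times> U"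
  have closed: "y \<in> U" if "(x, y) \<in> equivcl R" "x \<in> U" for x y
    using that equivcl_trans[OF _ that(1), of a] equivcl_trans[OF _ that(1), of b]
    unfolding U_def by blast
  have "equiv UNIV ?E"
  proof (rule equivI)
    show "?E \<subseteq> UNIV \<times> UNIV" by simp
    show "refl_on UNIV ?E" by (auto intro: refl_onI)
    show "sym ?E" by (rule symI) (auto dest: equivcl_sym)
    show "trans ?E"
    proof (rule transI)
      fix x y z assume xy: "(x, y) \<in> ?E" and yz: "(y, z) \<in> ?E"
      show "(x, z) \<in> ?E"
      proof (cases "(x, y) \<in> equivcl R \<and> (y, z) \<in> equivcl R")
        case True then show ?thesis using equivcl_trans[of x y R z] by blast
      next
        case False
        then have y: "y \<in> U" using xy yz by blast
        have "x \<in> U" using xy y closed[of y x] equivcl_sym[of x y R] by blast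
        moreover have "z \<in> U" using yz y closed[of y z] by blast
        ultimately show ?thesis by blast
      qed
    qed
  qed
  moreover have "insert (a, b) R \<subseteq> ?E"
    by (auto simp: U_def intro: r_into_equivcl)
  ultimately show "equivcl (insert (a, b) R) \<subseteq> ?E" by (rule equivcl_least[rotated])
  have ab: "(a, b) \<in> equivcl (insert (a, b) R)" by (simp add: r_into_equivcl)
  have sub: "equivcl R \<subseteq> equivcl (insert (a, b) R)" by (rule equivcl_mono) auto
  have aU: "(a, x) \<in> equivcl (insert (a, b) R)" if "x \<in> U" for x
  proof -
    have "(a, x) \<in> equivcl R \<or> (b, x) \<in> equivcl R" using that by (simp add: U_def)
    then show ?thesis using sub equivcl_trans[OF ab, of x] by blast
  qed
  show "?E \<subseteq> equivcl (insert (a, b) R)"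
  proof
    fix p assume "p \<in> ?E"
    then consider "p \<in> equivcl R" | x y where "p = (x, y)" "x \<in> U" "y \<in> U" by blast
    then show "p \<in> equivcl (insert (a, b) R)"
    proof cases
      case 1 then show ?thesis using sub by blast
    next
      case 2 then show ?thesis using equivcl_trans[OF equivcl_sym[OF aU] aU] by simp
    qed
  qed
qed

lemma num_components_insert_merge:
  assumes "finite A" and "a \<in> A" and "b \<in> A" and "(a, b) \<notin> equivcl R"
  shows "num_components A (insert (a, b) R) + 1 = num_components A R"
proof -
  define K where "K x = equivcl R `` {x}" for x
  define U where "U = K a \<union> K b"
  have U_iff: "x \<in> U \<longleftrightarrow> K x = K a \<or> K x = K b" for x
  proof -
    have "x \<in> K y \<longleftrightarrow> K x = K y" for y
      unfolding K_def equivcl_class_eq_iff by (auto intro: equivcl_sym)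
    then show ?thesis unfolding U_def by blast
  qed
  have class': "equivcl (insert (a, b) R) `` {x} = (if x \<in> U then U else K x)" for x
  proof -
    have "equivcl (insert (a, b) R) `` {x} = K x \<union> (if x \<in> U then U else {})"
      using equivcl_insert_merge[where R = R and a = a and b = b]
      unfolding U_def[unfolded K_def, symmetric] by (auto simp: K_def)
    moreover have "K x \<subseteq> U" if "x \<in> U" using that U_iff unfolding U_def by auto
    ultimately show ?thesis by auto
  qed
  have Kab: "K a \<noteq> K b" "K a \<in> A // equivcl R" "K b \<in> A // equivcl R"
    using assms(2-4) equivcl_class_eq_iff[of R a b] unfolding K_def quotient_equivcl by auto
  have U: "U \<notin> A // equivcl R - {K a, K b}"
  proof
    assume "U \<in> A // equivcl R - {K a, K b}"
    then obtain x where "U = K x" "K x \<noteq> K a" "K x \<noteq> K b"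
      by (auto simp: quotient_equivcl K_def)
    moreover have "x \<in> U" unfolding \<open>U = K x\<close> K_def by simp
    ultimately show False using U_iff by blast
  qed
  have "A // equivcl (insert (a, b) R) = insert U (A // equivcl R - {K a, K b})"
    unfolding quotient_equivcl class' K_def[symmetric] using assms(2) U_iff by (auto simp: U_def)
  moreover have fin: "finite (A // equivcl R)"
    using assms(1) by (simp add: quotient_equivcl)
  moreover have "card {K a, K b} \<le> card (A // equivcl R)"
    using Kab by (intro card_mono[OF fin]) auto
  ultimately show ?thesis
    unfolding num_components_def using Kab U by (simp add: card_Diff_subset)
qed

lemma num_components_insert_le:
  assumes "finite A" and "a \<in> A" and "b \<in> A"
  shows "num_components A (insert (a, b) R) \<le> num_components A R"
proof (cases "(a, b) \<in> equivcl R")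
  case True
  then show ?thesis by (simp add: num_components_def equivcl_insert_connected)
next
  case False
  then show ?thesis using num_components_insert_merge[OF assms False] by simp
qed

lemma num_components_insert_ge:
  assumes "finite A" and "a \<in> A" and "b \<in> A"
  shows "num_components A R \<le> num_components A (insert (a, b) R) + 1"
proof (cases "(a, b) \<in> equivcl R")
  case True
  then show ?thesis by (simp add: num_components_def equivcl_insert_connected)
next
  case False
  then show ?thesis using num_components_insert_merge[OF assms False] by simp
qed

lemma equivcl_Diff_eq:
  assumes "D \<inter> R \<subseteq> equivcl (R - D)"
  shows "equivcl (R - D) = equivcl R"
  by (rule equivcl_eqI) (use assms in \<open>auto intro: r_into_equivcl\<close>)

lemma quotient_equivcl_disjoint:
  assumes "X \<in> A // equivcl R" and "Y \<in> A // equivcl R" and "X \<noteq> Y"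
  shows "X \<inter> Y = {}"
proof -
  have "A // equivcl R \<subseteq> UNIV // equivcl R" by (auto simp: quotient_def)
  then show ?thesis using quotient_disj[OF equiv_equivcl] assms by blast
qed

lemma num_components_uniform:
  assumes "finite A" and "R \<subseteq> A \<times> A" and "\<And>x. x \<in> A \<Longrightarrow> card (equivcl R `` {x}) = k"
  shows "k * num_components A R = card A"
proof -
  have U: "\<Union> (A // equivcl R) = A"
  proof
    show "\<Union> (A // equivcl R) \<subseteq> A"
    proof
      fix y assume "y \<in> \<Union> (A // equivcl R)"
      then obtain x where "x \<in> A" "(x, y) \<in> equivcl R" by (auto simp: quotient_equivcl)
      then show "y \<in> A" using equivcl_closed[OF assms(2)] by blast
    qed
    show "A \<subseteq> \<Union> (A // equivcl R)" by (auto simp: quotient_equivcl)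
  qed
  have "k * card (A // equivcl R) = card (\<Union> (A // equivcl R))"
  proof (rule card_partition)
    show "finite (A // equivcl R)" using assms(1) by (simp add: quotient_equivcl)
    show "finite (\<Union> (A // equivcl R))" using assms(1) U by simp
    show "card X = k" if "X \<in> A // equivcl R" for X
      using that assms(3) unfolding quotient_equivcl by blast
    show "X \<inter> Y = {}" if "X \<in> A // equivcl R" "Y \<in> A // equivcl R" "X \<noteq> Y" for X Y
      using quotient_equivcl_disjoint[OF that] .
  qed
  then show ?thesis unfolding num_components_def U .
qed

section \<open>Cycles of permutations\<close>

lemma funpow_in: "bij_betw f A A \<Longrightarrow> y \<in> A \<Longrightarrow> (f ^^ n) y \<in> A"
  by (rule bij_betw_apply[OF bij_betw_funpow])

lemma funpow_period:
  assumes "finite A" and "bij_betw f A A" and "y \<in> A"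
  obtains n where "n > 0" and "(f ^^ n) y = y"
proof -
  have "\<not> inj (\<lambda>n. (f ^^ n) y)"
  proof
    assume "inj (\<lambda>n. (f ^^ n) y)"
    moreover have "finite (range (\<lambda>n. (f ^^ n) y))"
      using funpow_in[OF assms(2,3)] by (intro finite_subset[OF _ assms(1)]) auto
    ultimately show False using finite_imageD by fastforce
  qed
  then obtain i j where "i < j" and eq: "(f ^^ i) y = (f ^^ j) y"
    unfolding inj_def by (metis linorder_neqE_nat)
  then have "(f ^^ i) ((f ^^ (j - i)) y) = (f ^^ i) y"
    by (metis add_diff_inverse_nat funpow_add less_imp_not_less o_apply)
  then have "(f ^^ (j - i)) y = y"
    using bij_betw_funpow[OF assms(2), of i] funpow_in[OF assms(2,3)] assms(3)
    unfolding bij_betw_def inj_on_def by blast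
  with \<open>i < j\<close> show ?thesis by (intro that[of "j - i"]) simp_all
qed

lemma perm_orbit_eq_class:
  assumes "finite A" and "bij_betw f A A" and "y \<in> A"
  shows "{(f ^^ n) y | n. True} = equivcl (graph_on A f) `` {y}"
proof (intro equalityI subsetI)
  have "(y, (f ^^ n) y) \<in> equivcl (graph_on A f)" for n
  proof (induction n)
    case (Suc n)
    have "((f ^^ n) y, (f ^^ Suc n) y) \<in> equivcl (graph_on A f)"
      using funpow_in[OF assms(2,3)] by (simp add: r_into_equivcl)
    with Suc.IH show ?case by (rule equivcl_trans)
  qed simp
  then show "z \<in> equivcl (graph_on A f) `` {y}" if "z \<in> {(f ^^ n) y | n. True}" for z
    using that by blast
next
  fix z assume "z \<in> equivcl (graph_on A f) `` {y}"
  then have "(y, z) \<in> equivcl (graph_on A f)" by simp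
  then show "z \<in> {(f ^^ n) y | n. True}"
  proof (induction rule: equivcl_induct)
    case base
    show ?case by (metis (mono_tags) funpow_0 mem_Collect_eq)
  next
    case (step w z)
    then obtain n where w: "w = (f ^^ n) y" by blast
    from step(2) consider "z = f w" | "z \<in> A" "w = f z" by auto
    then show ?case
    proof cases
      case 1
      then have "z = (f ^^ Suc n) y" using w by simp
      then show ?thesis by blast
    next
      case 2
      obtain p where p: "p > 0" "(f ^^ p) y = y" by (rule funpow_period[OF assms])
      have "f ((f ^^ (n + p - 1)) y) = (f ^^ (n + p)) y"
        using p(1) by (metis Suc_diff_1 add_gr_0 comp_apply funpow.simps(2))
      also have "\<dots> = w" using w p(2) by (simp add: funpow_add)
      finally have "z = (f ^^ (n + p - 1)) y"
        using 2 funpow_in[OF assms(2,3)] assms(2) unfolding bij_betw_def inj_on_def by metis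
      then show ?thesis by blast
    qed
  qed
qed

lemma perm_orbits_eq_quotient:
  assumes "finite A" and "bij_betw f A A"
  shows "perm_orbits A f = A // equivcl (graph_on A f)"
proof -
  have "perm_orbits A f = (\<lambda>y. {(f ^^ n) y | n. True}) ` A"
    by (auto simp: perm_orbits_def)
  also have "\<dots> = A // equivcl (graph_on A f)"
    unfolding quotient_equivcl using perm_orbit_eq_class[OF assms] by (rule image_cong[OF refl])
  finally show ?thesis .
qed

lemma involution_class:
  assumes "\<forall>x\<in>A. a x \<in> A \<and> a (a x) = x" and "y \<in> A"
  shows "equivcl (graph_on A a) `` {y} = {y, a y}"
proof (intro equalityI subsetI)
  fix z assume "z \<in> equivcl (graph_on A a) `` {y}"
  then have "(y, z) \<in> equivcl (graph_on A a)" by simp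
  then show "z \<in> {y, a y}"
  proof (induction rule: equivcl_induct)
    case (step w z)
    then show ?case using assms by (metis in_graph_on insert_iff singletonD)
  qed simp
qed (use assms(2) in \<open>auto intro: r_into_equivcl\<close>)

lemma num_components_fixpoint_free_involution:
  assumes "finite A" and "\<forall>x\<in>A. a x \<in> A \<and> a (a x) = x \<and> a x \<noteq> x"
  shows "2 * num_components A (graph_on A a) = card A"
  by (rule num_components_uniform) (use assms involution_class[of A a] in auto)

lemma perm_cycle_edge:
  assumes "finite A" and "bij_betw f A A" and "y \<in> A"
    and "\<And>z. z \<in> A \<Longrightarrow> (z, f z) \<in> D \<Longrightarrow> (y, z) \<in> equivcl (graph_on A f) \<Longrightarrow> z = y"
  shows "(y, f y) \<in> equivcl (graph_on A f - D)"
proof -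
  obtain p where "p > 0" "(f ^^ p) y = y" by (rule funpow_period[OF assms(1-3)])
  then obtain p where p: "0 < p" "(f ^^ p) y = y" and least: "\<And>q. 0 < q \<Longrightarrow> q < p \<Longrightarrow> (f ^^ q) y \<noteq> y"
    using exists_least_iff[of "\<lambda>p. 0 < p \<and> (f ^^ p) y = y"] by blast
  have "(f y, (f ^^ Suc k) y) \<in> equivcl (graph_on A f - D)" if "Suc k \<le> p" for k
    using that
  proof (induction k)
    case (Suc k)
    define z where "z = (f ^^ Suc k) y"
    have "(y, z) \<in> equivcl (graph_on A f)"
      using perm_orbit_eq_class[OF assms(1-3)] unfolding z_def by blast
    moreover have "z \<noteq> y" using least[of "Suc k"] Suc.prems unfolding z_def by simp
    moreover have "z \<in> A" unfolding z_def by (rule funpow_in[OF assms(2,3)])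
    ultimately have "(z, f z) \<in> graph_on A f - D" using assms(4)[of z] by auto
    then have "(z, (f ^^ Suc (Suc k)) y) \<in> equivcl (graph_on A f - D)"
      unfolding z_def by (simp add: r_into_equivcl)
    moreover have "(f y, z) \<in> equivcl (graph_on A f - D)" using Suc unfolding z_def by simp
    ultimately show ?case by (rule equivcl_trans[rotated])
  qed simp
  from this[of "p - 1"] have "(f y, y) \<in> equivcl (graph_on A f - D)" using p by simp
  then show ?thesis by (rule equivcl_sym)
qed

lemma num_components_transposition:
  fixes f :: "'a \<Rightarrow> 'a" and i j :: 'a
  defines "g \<equiv> f(i := f j, j := f i)"
  assumes "finite A" and "bij_betw f A A" and "i \<in> A" and "j \<in> A" and "i \<noteq> j"
  shows "num_components A (graph_on A g) \<le> num_components A (graph_on A f) + 1"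
    and "(i, j) \<notin> equivcl (graph_on A f) \<Longrightarrow>
      num_components A (graph_on A g) + 1 \<le> num_components A (graph_on A f)"
proof -
  have fi: "f i \<in> A" and fj: "f j \<in> A" using assms(3-5) by (auto simp: bij_betw_def)
  define R0 where "R0 = graph_on A f - {(i, f i), (j, f j)}"
  have g: "graph_on A g = insert (j, f i) (insert (i, f j) R0)"
    using assms(4-6) unfolding R0_def g_def graph_on_def by auto
  have g_le: "num_components A (graph_on A g) \<le> num_components A R0"
    unfolding g using num_components_insert_le[OF assms(2) assms(5) fi, of "insert (i, f j) R0"]
      num_components_insert_le[OF assms(2) assms(4) fj, of R0] by linarith
  have "(i, f i) \<in> equivcl (graph_on A f - {(i, f i)})"
    by (rule perm_cycle_edge[OF assms(2-4)]) auto
  then have "equivcl (graph_on A f - {(i, f i)}) = equivcl (graph_on A f)"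
    by (intro equivcl_Diff_eq) auto
  moreover have "graph_on A f - {(i, f i)} = insert (j, f j) R0"
    using assms(5,6) unfolding R0_def by auto
  ultimately have "num_components A R0 \<le> num_components A (graph_on A f) + 1"
    using num_components_insert_ge[OF assms(2) assms(5) fj, of R0] by (simp add: num_components_def)
  then show "num_components A (graph_on A g) \<le> num_components A (graph_on A f) + 1"
    using g_le by linarith
  assume ij: "(i, j) \<notin> equivcl (graph_on A f)"
  have ji: "(j, i) \<notin> equivcl (graph_on A f)" using ij equivcl_sym[of j i] by blast
  have "(i, f i) \<in> equivcl R0" "(j, f j) \<in> equivcl R0"
    unfolding R0_def using ij ji assms(4,5)
    by (intro perm_cycle_edge[OF assms(2,3)]; auto)+
  then have R0: "equivcl R0 = equivcl (graph_on A f)"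
    unfolding R0_def by (intro equivcl_Diff_eq) (auto simp: R0_def)
  have "(i, f j) \<notin> equivcl R0"
  proof
    assume "(i, f j) \<in> equivcl R0"
    moreover have "(f j, j) \<in> equivcl R0" unfolding R0 using assms(5) by (simp add: converse_r_into_equivcl)
    ultimately have "(i, j) \<in> equivcl R0" by (rule equivcl_trans)
    then show False using ij R0 by simp
  qed
  then have "num_components A (insert (i, f j) R0) + 1 = num_components A (graph_on A f)"
    using num_components_insert_merge[OF assms(2,4) fj] R0 by (simp add: num_components_def)
  then show "num_components A (graph_on A g) + 1 \<le> num_components A (graph_on A f)"
    unfolding g using num_components_insert_le[OF assms(2) assms(5) fi, of "insert (i, f j) R0"] by linarith
qed

lemma subset_equivcl: "R \<subseteq> equivcl R"
  using r_into_equivcl by fastforce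

lemma equivcl_isolated:
  assumes "\<And>y z. (y, z) \<in> R \<Longrightarrow> y = x \<longleftrightarrow> z = x" and "(x, z) \<in> equivcl R"
  shows "z = x"
  using assms(2) by (induction rule: equivcl_induct) (use assms(1) in blast)+

lemma equivcl_graph_comp:
  assumes "f ` A \<subseteq> A"
  shows "equivcl (graph_on A (g \<circ> f)) \<subseteq> equivcl (graph_on A g \<union> graph_on A f)"
proof -
  have "(y, g (f y)) \<in> equivcl (graph_on A g \<union> graph_on A f)" if "y \<in> A" for y
  proof -
    have "(y, f y) \<in> equivcl (graph_on A g \<union> graph_on A f)"
      using that by (simp add: r_into_equivcl)
    moreover have "f y \<in> A" using that assms by blast
    then have "(f y, g (f y)) \<in> equivcl (graph_on A g \<union> graph_on A f)"
      by (simp add: r_into_equivcl)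
    ultimately show ?thesis by (rule equivcl_trans)
  qed
  then show ?thesis by (intro equivcl_subset) (auto simp: graph_on_def)
qed

lemma equivcl_involution_split:
  fixes a :: "'a \<Rightarrow> 'a" and x :: 'a
  defines "a' \<equiv> a(x := x, a x := a x)"
  assumes "\<forall>y\<in>H. a y \<in> H \<and> a (a y) = y" and "x \<in> H"
  shows "equivcl (S \<union> graph_on H a) = equivcl (insert (x, a x) (S \<union> graph_on H a'))"
proof (rule equivcl_eqI)
  let ?E = "equivcl (insert (x, a x) (S \<union> graph_on H a'))"
  have "(y, a y) \<in> ?E" if "y \<in> H" for y
  proof -
    consider "y = x" | "y = a x" | "y \<noteq> x" "y \<noteq> a x" by blast
    then show ?thesis
    proof cases
      case 1 then show ?thesis by (simp add: r_into_equivcl)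
    next
      case 2 then show ?thesis using assms(2,3) by (simp add: converse_r_into_equivcl)
    next
      case 3
      then have "(y, a y) \<in> graph_on H a'" using that unfolding a'_def by simp
      then show ?thesis by (simp add: r_into_equivcl)
    qed
  qed
  then show "S \<union> graph_on H a \<subseteq> ?E"
    using subset_equivcl[of "insert (x, a x) (S \<union> graph_on H a')"] by (auto simp: graph_on_def)
  have "(y, a' y) \<in> equivcl (S \<union> graph_on H a)" if "y \<in> H" for y
    using that unfolding a'_def by (simp add: r_into_equivcl)
  moreover have "(x, a x) \<in> equivcl (S \<union> graph_on H a)"
    using assms(3) by (simp add: r_into_equivcl)
  ultimately show "insert (x, a x) (S \<union> graph_on H a') \<subseteq> equivcl (S \<union> graph_on H a)"
    using subset_equivcl[of "S \<union> graph_on H a"] by (auto simp: graph_on_def)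
qed

lemma involution_remove_pair:
  assumes "\<forall>y\<in>H. a y \<in> H \<and> a (a y) = y" and "x \<in> H"
  shows "\<forall>y\<in>H. (a(x := x, a x := a x)) y \<in> H \<and> (a(x := x, a x := a x)) ((a(x := x, a x := a x)) y) = y"
proof -
  have "a y \<noteq> x" "a y \<noteq> a x" if "y \<in> H" "y \<noteq> x" "y \<noteq> a x" for y
    using that assms by metis+
  then show ?thesis using assms by auto
qed

lemma perm_genus_step:
  fixes a :: "'a \<Rightarrow> 'a" and x :: 'a
  defines "a' \<equiv> a(x := x, a x := a x)"
  assumes "finite H" and "bij_betw s H H" and a: "\<forall>y\<in>H. a y \<in> H \<and> a (a y) = y"
    and "x \<in> H" and "a x \<noteq> x"
  shows "num_components H (graph_on H a) + num_components H (graph_on H (s \<circ> a))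
           + 2 * num_components H (graph_on H s \<union> graph_on H a')
         \<le> num_components H (graph_on H a') + num_components H (graph_on H (s \<circ> a'))
           + 2 * num_components H (graph_on H s \<union> graph_on H a)"
proof -
  have ax: "a x \<in> H" "a (a x) = x" using a assms(5) by auto
  have a': "\<forall>y\<in>H. a' y \<in> H \<and> a' (a' y) = y"
    unfolding a'_def by (rule involution_remove_pair[OF a assms(5)])
  have "a x = x" if "(x, a x) \<in> equivcl (graph_on H a')"
    by (rule equivcl_isolated[OF _ that]) (use a in \<open>auto simp: a'_def\<close>)
  then have "(x, a x) \<notin> equivcl (graph_on H a')" using assms(6) by blast
  then have a_count: "num_components H (graph_on H a') = num_components H (graph_on H a) + 1"
    using num_components_insert_merge[OF assms(2,5) ax(1)]
      equivcl_involution_split[OF a assms(5), of "{}"]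
    by (simp add: num_components_def flip: a'_def)
  have s_a: "equivcl (graph_on H s \<union> graph_on H a)
      = equivcl (insert (x, a x) (graph_on H s \<union> graph_on H a'))"
    unfolding a'_def by (rule equivcl_involution_split[OF a assms(5)])
  have sa: "s \<circ> a = (s \<circ> a')(x := (s \<circ> a') (a x), a x := (s \<circ> a') x)"
    using ax unfolding a'_def by (auto simp: fun_eq_iff)
  have "bij_betw (s \<circ> a') H H"
    using a' by (intro bij_betw_trans[OF _ assms(3)] bij_betw_byWitness[of H a' a']) auto
  note swap = num_components_transposition[OF assms(2) this assms(5) ax(1) assms(6)[symmetric],
      folded sa]
  show ?thesis
  proof (cases "(x, a x) \<in> equivcl (graph_on H s \<union> graph_on H a')")
    case True
    then have "num_components H (graph_on H s \<union> graph_on H a)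
        = num_components H (graph_on H s \<union> graph_on H a')"
      using s_a equivcl_insert_connected[OF True] by (simp add: num_components_def)
    then show ?thesis using a_count swap(1) by linarith
  next
    case False
    then have "num_components H (graph_on H s \<union> graph_on H a) + 1
        = num_components H (graph_on H s \<union> graph_on H a')"
      using s_a num_components_insert_merge[OF assms(2,5) ax(1)] by (simp add: num_components_def)
    moreover have "(x, a x) \<notin> equivcl (graph_on H (s \<circ> a'))"
      using False equivcl_graph_comp[of a' H s] a' by blast
    ultimately show ?thesis using a_count swap(2) by linarith
  qed
qed

text \<open>Euler's inequality \<open>V - E + F \<le> 2 C\<close> for the map whose vertices, edges and faces are
  the cycles of \<open>s\<close>, \<open>a\<close> and \<open>s \<circ> a\<close>; the transpositions of \<open>a\<close> are removed one at a time.\<close>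

lemma perm_genus_inequality:
  assumes "finite H" and "bij_betw s H H" and "\<forall>y\<in>H. a y \<in> H \<and> a (a y) = y"
  shows "num_components H (graph_on H s) + num_components H (graph_on H a)
           + num_components H (graph_on H (s \<circ> a))
         \<le> card H + 2 * num_components H (graph_on H s \<union> graph_on H a)"
  using assms(3)
proof (induction "card {y\<in>H. a y \<noteq> y}" arbitrary: a rule: less_induct)
  case less
  show ?case
  proof (cases "\<exists>x\<in>H. a x \<noteq> x")
    case False
    then have "num_components H (graph_on H a) = card H"
      using num_components_uniform[OF assms(1), of "graph_on H a" 1] involution_class[OF less.prems]
      by fastforce
    moreover have "graph_on H (s \<circ> a) = graph_on H s"
      using False by (intro graph_on_cong) simp
    moreover have "equivcl (graph_on H s \<union> graph_on H a) = equivcl (graph_on H s)"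
      using False by (intro equivcl_eqI) (auto intro: r_into_equivcl)
    ultimately show ?thesis by (simp add: num_components_def)
  next
    case True
    then obtain x where x: "x \<in> H" "a x \<noteq> x" by blast
    have "card {y\<in>H. (a(x := x, a x := a x)) y \<noteq> y} \<le> card ({y\<in>H. a y \<noteq> y} - {x})"
      using assms(1) by (intro card_mono) auto
    also have "\<dots> < card {y\<in>H. a y \<noteq> y}"
      using assms(1) x by (intro card_Diff1_less) auto
    finally have "card {y\<in>H. (a(x := x, a x := a x)) y \<noteq> y} < card {y\<in>H. a y \<noteq> y}" .
    from less.hyps[OF this involution_remove_pair[OF less.prems x(1)]]
    show ?thesis using perm_genus_step[OF assms(1,2) less.prems x] by linarith
  qed
qed

section \<open>Double covers\<close>

text \<open>The double cover of \<open>R\<close> on \<open>A \<times> UNIV\<close> whose edges leaving \<open>y\<close> switch sheets iff \<open>f y\<close>.\<close>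

definition lift_rel :: "('a \<times> 'a) set \<Rightarrow> ('a \<Rightarrow> bool) \<Rightarrow> (('a \<times> bool) \<times> ('a \<times> bool)) set" where
  "lift_rel R f = {((y, t), (z, t \<noteq> f y)) | y z t. (y, z) \<in> R}"

lemma in_lift_rel [simp]: "((y, t), (z, u)) \<in> lift_rel R f \<longleftrightarrow> (y, z) \<in> R \<and> u = (t \<noteq> f y)"
  by (auto simp: lift_rel_def)

lemma lift_rel_Un: "lift_rel (R \<union> S) f = lift_rel R f \<union> lift_rel S f"
  by (auto simp: lift_rel_def)

lemma lift_rel_path:
  assumes "(y, z) \<in> equivcl R"
  shows "\<exists>u. ((y, t), (z, u)) \<in> equivcl (lift_rel R f)"
  using assms
proof (induction rule: equivcl_induct)
  case base then show ?case by (intro exI[of _ t]) simp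
next
  case (step w z)
  then obtain u where u: "((y, t), (w, u)) \<in> equivcl (lift_rel R f)" by blast
  from step(2) have "((w, u), (z, u \<noteq> f w)) \<in> equivcl (lift_rel R f)
      \<or> ((w, u), (z, u \<noteq> f z)) \<in> equivcl (lift_rel R f)"
    by (auto intro: r_into_equivcl converse_r_into_equivcl)
  then show ?case using equivcl_trans[OF u] by blast
qed

lemma lift_rel_flip:
  assumes "((y, t), (z, u)) \<in> equivcl (lift_rel R f)"
  shows "((y, \<not> t), (z, \<not> u)) \<in> equivcl (lift_rel R f)"
  using equivcl_map[of "lift_rel R f" "\<lambda>(y, t). (y, \<not> t)" "lift_rel R f", OF _ assms]
  by (force simp: lift_rel_def intro: r_into_equivcl)

lemma lift_rel_section_iff:
  assumes "\<forall>(y, z)\<in>R. g z = (g y \<noteq> f y)"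
  shows "((y, t), (z, u)) \<in> equivcl (lift_rel R f)
    \<longleftrightarrow> (y, z) \<in> equivcl R \<and> (t \<noteq> g y) = (u \<noteq> g z)"
proof
  assume "((y, t), (z, u)) \<in> equivcl (lift_rel R f)"
  then have "(y, fst (z, u)) \<in> equivcl R \<and> (t \<noteq> g y) = (snd (z, u) \<noteq> g (fst (z, u)))"
  proof (induction rule: equivcl_induct)
    case (step p q)
    then show ?case using assms
      by (cases p; cases q) (auto simp: lift_rel_def intro: equivcl_trans[OF _ r_into_equivcl]
          equivcl_trans[OF _ converse_r_into_equivcl])
  qed simp
  then show "(y, z) \<in> equivcl R \<and> (t \<noteq> g y) = (u \<noteq> g z)" by simp
next
  assume "(y, z) \<in> equivcl R \<and> (t \<noteq> g y) = (u \<noteq> g z)"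
  then have yz: "(y, z) \<in> equivcl R" and u: "u = ((t \<noteq> g y) \<noteq> g z)" by auto
  have "((y, t), (z, (t \<noteq> g y) \<noteq> g z)) \<in> equivcl (lift_rel R f)"
    using yz
  proof (induction rule: equivcl_induct)
    case base
    have "((t \<noteq> g y) \<noteq> g y) = t" by blast
    then show ?case by simp
  next
    case (step w z)
    define c where "c = (t \<noteq> g y)"
    have edge: "((v, c \<noteq> g v), (v', c \<noteq> g v')) \<in> lift_rel R f" if "(v, v') \<in> R" for v v'
    proof -
      have "g v' = (g v \<noteq> f v)" using assms that by blast
      then show ?thesis using that by auto
    qed
    from step(2) have "((w, c \<noteq> g w), (z, c \<noteq> g z)) \<in> equivcl (lift_rel R f)"
    proof
      assume "(w, z) \<in> R"
      from r_into_equivcl[OF edge[OF this]] show ?thesis .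
    next
      assume "(z, w) \<in> R"
      from converse_r_into_equivcl[OF edge[OF this]] show ?thesis .
    qed
    then have "((w, (t \<noteq> g y) \<noteq> g w), (z, (t \<noteq> g y) \<noteq> g z)) \<in> equivcl (lift_rel R f)"
      unfolding c_def .
    with step.IH show ?case by (rule equivcl_trans)
  qed
  then show "((y, t), (z, u)) \<in> equivcl (lift_rel R f)" using u by simp
qed

lemma lift_rel_class_section:
  assumes "\<forall>(y, z)\<in>R. g z = (g y \<noteq> f y)"
  shows "equivcl (lift_rel R f) `` {(y, t)} = (\<lambda>z. (z, (t \<noteq> g y) \<noteq> g z)) ` (equivcl R `` {y})"
proof (rule set_eqI, clarify)
  fix z u
  have "(z, u) \<in> (\<lambda>z. (z, (t \<noteq> g y) \<noteq> g z)) ` (equivcl R `` {y})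
      \<longleftrightarrow> (y, z) \<in> equivcl R \<and> u = ((t \<noteq> g y) \<noteq> g z)"
    by auto
  then show "(z, u) \<in> equivcl (lift_rel R f) `` {(y, t)}
      \<longleftrightarrow> (z, u) \<in> (\<lambda>z. (z, (t \<noteq> g y) \<noteq> g z)) ` (equivcl R `` {y})"
    using lift_rel_section_iff[OF assms, of y t z u] by auto
qed

lemma num_components_lift_rel_section:
  assumes "finite A" and "\<forall>(y, z)\<in>R. g z = (g y \<noteq> f y)"
  shows "num_components (A \<times> UNIV) (lift_rel R f) = 2 * num_components A R"
proof -
  define L where "L = (\<lambda>(K, b). (\<lambda>z. (z, b \<noteq> g z)) ` K)"
  have "(A \<times> UNIV) // equivcl (lift_rel R f) = L ` ((A // equivcl R) \<times> UNIV)"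
  proof (intro equalityI subsetI)
    fix X assume "X \<in> (A \<times> UNIV) // equivcl (lift_rel R f)"
    then obtain y t where "y \<in> A" "X = equivcl (lift_rel R f) `` {(y, t)}"
      by (auto simp: quotient_equivcl)
    then show "X \<in> L ` ((A // equivcl R) \<times> UNIV)"
      unfolding L_def lift_rel_class_section[OF assms(2)] quotient_equivcl by force
  next
    fix X assume "X \<in> L ` ((A // equivcl R) \<times> UNIV)"
    then obtain y b where y: "y \<in> A" and X: "X = L (equivcl R `` {y}, b)"
      by (auto simp: quotient_equivcl)
    have "(b \<noteq> g y) \<noteq> g y = b" by blast
    then have "X = equivcl (lift_rel R f) `` {(y, b \<noteq> g y)}"
      unfolding X L_def lift_rel_class_section[OF assms(2)] by simp
    then show "X \<in> (A \<times> UNIV) // equivcl (lift_rel R f)"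
      using y by (auto simp: quotient_equivcl)
  qed
  moreover have "inj_on L ((A // equivcl R) \<times> UNIV)"
  proof (rule inj_onI, clarify)
    fix K b K' b' assume K: "K \<in> A // equivcl R" "K' \<in> A // equivcl R"
      and eq: "L (K, b) = L (K', b')"
    have "fst ` L (K, b) = K" "fst ` L (K', b') = K'" unfolding L_def by force+
    then have "K = K'" using eq by simp
    moreover obtain x where "K = equivcl R `` {x}" using K(1) by (auto simp: quotient_equivcl)
    then have "x \<in> K" by simp
    ultimately show "K = K' \<and> b = b'" using eq unfolding L_def by auto
  qed
  ultimately show ?thesis
    unfolding num_components_def by (simp add: card_image card_cartesian_product)
qed

lemma quotient_lift_rel:
  assumes "R \<subseteq> A \<times> A"
  shows "(A \<times> UNIV) // equivcl (lift_rel R f)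
    = (\<lambda>(K, b). equivcl (lift_rel R f) `` {(SOME z. z \<in> K, b)}) ` ((A // equivcl R) \<times> UNIV)"
proof -
  have rep: "(x, SOME z. z \<in> equivcl R `` {x}) \<in> equivcl R" for x
    using someI[of "\<lambda>z. z \<in> equivcl R `` {x}" x] by simp
  show ?thesis
  proof (intro equalityI subsetI)
    fix X assume "X \<in> (A \<times> UNIV) // equivcl (lift_rel R f)"
    then obtain x s where x: "x \<in> A" and X: "X = equivcl (lift_rel R f) `` {(x, s)}"
      by (auto simp: quotient_equivcl)
    obtain u where "((x, s), (SOME z. z \<in> equivcl R `` {x}, u)) \<in> equivcl (lift_rel R f)"
      using lift_rel_path[OF rep] by blast
    then have "X = equivcl (lift_rel R f) `` {(SOME z. z \<in> equivcl R `` {x}, u)}"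
      unfolding X by (simp add: equivcl_class_eq_iff)
    then show "X \<in> (\<lambda>(K, b). equivcl (lift_rel R f) `` {(SOME z. z \<in> K, b)}) ` ((A // equivcl R) \<times> UNIV)"
      using x by (intro image_eqI[where x = "(equivcl R `` {x}, u)"]) (auto simp: quotient_equivcl)
  next
    fix X assume "X \<in> (\<lambda>(K, b). equivcl (lift_rel R f) `` {(SOME z. z \<in> K, b)}) ` ((A // equivcl R) \<times> UNIV)"
    then obtain x b where x: "x \<in> A"
      and X: "X = equivcl (lift_rel R f) `` {(SOME z. z \<in> equivcl R `` {x}, b)}"
      by (auto simp: quotient_equivcl)
    moreover have "(SOME z. z \<in> equivcl R `` {x}) \<in> A" using equivcl_closed[OF assms rep x] .
    ultimately show "X \<in> (A \<times> UNIV) // equivcl (lift_rel R f)"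
      by (auto simp: quotient_equivcl)
  qed
qed

lemma num_components_lift_rel_less:
  assumes "finite A" and "R \<subseteq> A \<times> A" and "y \<in> A"
    and "((y, t), (y, \<not> t)) \<in> equivcl (lift_rel R f)"
  shows "num_components (A \<times> UNIV) (lift_rel R f) < 2 * num_components A R"
proof -
  define \<Phi> where "\<Phi> = (\<lambda>(K, b). equivcl (lift_rel R f) `` {(SOME z. z \<in> K, b)})"
  define D where "D = (A // equivcl R) \<times> (UNIV :: bool set)"
  have "\<not> inj_on \<Phi> D"
  proof
    assume inj: "inj_on \<Phi> D"
    define r where "r = (SOME z. z \<in> equivcl R `` {y})"
    have "(y, r) \<in> equivcl R" using someI[of "\<lambda>z. z \<in> equivcl R `` {y}" y] by (simp add: r_def)
    from lift_rel_path[OF equivcl_sym[OF this]]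
    obtain u where u: "((r, False), (y, u)) \<in> equivcl (lift_rel R f)" by blast
    have "((y, u), (y, \<not> u)) \<in> equivcl (lift_rel R f)"
      using assms(4) lift_rel_flip[OF assms(4)] by (cases "u = t") auto
    then have "((r, False), (r, True)) \<in> equivcl (lift_rel R f)"
      using equivcl_trans[OF equivcl_trans[OF u] equivcl_sym[OF lift_rel_flip[OF u]]] by simp
    then have "\<Phi> (equivcl R `` {y}, False) = \<Phi> (equivcl R `` {y}, True)"
      by (simp add: \<Phi>_def r_def equivcl_class_eq_iff)
    moreover have "(equivcl R `` {y}, b) \<in> D" for b using assms(3) by (simp add: D_def quotient_equivcl)
    ultimately show False using inj_onD[OF inj] by blast
  qed
  moreover have finD: "finite D" using assms(1) by (simp add: D_def quotient_equivcl)
  ultimately have "card (\<Phi> ` D) \<noteq> card D" using eq_card_imp_inj_on by blast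
  then have "card (\<Phi> ` D) < card D" using card_image_le[OF finD, of \<Phi>] by linarith
  then show ?thesis
    unfolding num_components_def quotient_lift_rel[OF assms(2)]
    by (simp add: D_def \<Phi>_def card_cartesian_product)
qed

lemma lift_rel_section:
  assumes "R \<subseteq> A \<times> A" and no_flip: "\<And>y t. y \<in> A \<Longrightarrow> ((y, t), (y, \<not> t)) \<notin> equivcl (lift_rel R f)"
  obtains g where "\<forall>(y, z)\<in>R. g z = (g y \<noteq> f y)"
proof -
  define r where "r y = (SOME z. z \<in> equivcl R `` {y})" for y
  have r: "(y, r y) \<in> equivcl R" for y
    unfolding r_def using someI[of "\<lambda>z. z \<in> equivcl R `` {y}" y] by simp
  have r_eq: "r y = r z" if "(y, z) \<in> equivcl R" for y z
    unfolding r_def using that by (simp add: equivcl_class_eq_iff[symmetric])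
  define g where "g y = (((y, True), (r y, False)) \<in> equivcl (lift_rel R f))" for y
  have unique: "t = g y" if "y \<in> A" and "((y, t), (r y, False)) \<in> equivcl (lift_rel R f)" for y t
  proof (rule ccontr)
    assume "t \<noteq> g y"
    then have "t = False" "((y, True), (r y, False)) \<in> equivcl (lift_rel R f)"
      using that(2) unfolding g_def by auto
    then show False
      using no_flip[OF that(1), of True] equivcl_trans[OF _ equivcl_sym[OF that(2)]] by auto
  qed
  have g: "((y, g y), (r y, False)) \<in> equivcl (lift_rel R f)" if "y \<in> A" for y
  proof -
    obtain t where "((r y, False), (y, t)) \<in> equivcl (lift_rel R f)"
      using lift_rel_path[OF equivcl_sym[OF r]] by blast
    with unique[OF that] show ?thesis by (metis equivcl_sym)
  qed
  have "g z = (g y \<noteq> f y)" if "(y, z) \<in> R" for y z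
  proof (rule unique[symmetric])
    show "z \<in> A" using that assms(1) by blast
    have "((z, g y \<noteq> f y), (y, g y)) \<in> equivcl (lift_rel R f)"
      using that by (simp add: converse_r_into_equivcl)
    moreover have "r z = r y" using that by (simp add: r_eq[symmetric] r_into_equivcl)
    ultimately show "((z, g y \<noteq> f y), (r z, False)) \<in> equivcl (lift_rel R f)"
      using equivcl_trans g assms(1) that by fastforce
  qed
  then show ?thesis using that by blast
qed

lemma lift_rel_section_exists:
  assumes "finite A" and "R \<subseteq> A \<times> A"
    and "2 * num_components A R \<le> num_components (A \<times> UNIV) (lift_rel R f)"
  obtains g where "\<forall>(y, z)\<in>R. g z = (g y \<noteq> f y)"
  using lift_rel_section[OF assms(2)] num_components_lift_rel_less[OF assms(1,2)] assms(3)
  by (meson not_less)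

definition lift_fun :: "('a \<Rightarrow> 'a) \<Rightarrow> ('a \<Rightarrow> bool) \<Rightarrow> 'a \<times> bool \<Rightarrow> 'a \<times> bool" where
  "lift_fun s f = (\<lambda>(y, t). (s y, t \<noteq> f y))"

lemma graph_on_lift_fun: "graph_on (A \<times> UNIV) (lift_fun s f) = lift_rel (graph_on A s) f"
  by (auto simp: graph_on_def lift_rel_def lift_fun_def)

lemma bij_betw_lift_fun:
  assumes "bij_betw s A A"
  shows "bij_betw (lift_fun s f) (A \<times> UNIV) (A \<times> UNIV)"
proof (rule bij_betw_byWitness[where f' = "lift_fun (inv_into A s) (f \<circ> inv_into A s)"])
  have inv: "inv_into A s (s y) = y" "s (inv_into A s y) = y" "inv_into A s y \<in> A" if "y \<in> A" for y
    using that assms f_inv_into_f[of y s A] by (auto simp: bij_betw_def inv_into_into)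
  show "\<forall>p\<in>A \<times> UNIV. lift_fun (inv_into A s) (f \<circ> inv_into A s) (lift_fun s f p) = p"
    using inv(1) by (auto simp: lift_fun_def)
  show "\<forall>p\<in>A \<times> UNIV. lift_fun s f (lift_fun (inv_into A s) (f \<circ> inv_into A s) p) = p"
    using inv(2) by (auto simp: lift_fun_def)
  show "lift_fun s f ` (A \<times> UNIV) \<subseteq> A \<times> UNIV"
    using assms by (auto simp: lift_fun_def bij_betw_def)
  show "lift_fun (inv_into A s) (f \<circ> inv_into A s) ` (A \<times> UNIV) \<subseteq> A \<times> UNIV"
    using inv(3) by (auto simp: lift_fun_def)
qed

text \<open>By Euler's inequality for the double cover defined by \<open>f\<close>, Euler's formula forces the
  cover to have twice as many components as the map, so it has a section.\<close>

lemma planar_potential: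
  assumes "finite H" and "bij_betw s H H" and a: "\<forall>y\<in>H. a y \<in> H \<and> a (a y) = y \<and> a y \<noteq> y"
    and fa: "\<forall>y\<in>H. f (a y) = f y" and h: "\<forall>y\<in>H. h (s y) = (h y \<noteq> f y)"
    and planar: "2 * num_components H (graph_on H s) + 2 * num_components H (graph_on H (s \<circ> a))
      = card H + 4 * num_components H (graph_on H s \<union> graph_on H a)"
  obtains g where "\<forall>y\<in>H. g (s y) = (g y \<noteq> f y) \<and> g (a y) = (g y \<noteq> f y)"
proof -
  let ?HH = "H \<times> (UNIV :: bool set)"
  have s_lift: "num_components ?HH (graph_on ?HH (lift_fun s f)) = 2 * num_components H (graph_on H s)"
    unfolding graph_on_lift_fun using h
    by (intro num_components_lift_rel_section[OF assms(1), where g = h]) auto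
  have "graph_on ?HH (lift_fun s f \<circ> lift_fun a f) = graph_on ?HH (lift_fun (s \<circ> a) (\<lambda>_. False))"
    using fa by (intro graph_on_cong) (auto simp: lift_fun_def)
  then have sa_lift: "num_components ?HH (graph_on ?HH (lift_fun s f \<circ> lift_fun a f))
      = 2 * num_components H (graph_on H (s \<circ> a))"
    unfolding graph_on_lift_fun
    by (simp add: num_components_lift_rel_section[OF assms(1), where g = "\<lambda>_. False"])
  have a_lift: "\<forall>p\<in>?HH. lift_fun a f p \<in> ?HH \<and> lift_fun a f (lift_fun a f p) = p
      \<and> lift_fun a f p \<noteq> p"
    using a fa by (auto simp: lift_fun_def)
  have "2 * num_components ?HH (graph_on ?HH (lift_fun a f)) = card ?HH"
    using num_components_fixpoint_free_involution[OF _ a_lift] assms(1) by simp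
  moreover have "card ?HH = 2 * card H" using assms(1) by (simp add: card_cartesian_product)
  moreover note perm_genus_inequality[OF _ bij_betw_lift_fun[OF assms(2), of f], of "lift_fun a f"]
  ultimately have le: "2 * num_components H (graph_on H s \<union> graph_on H a)
      \<le> num_components ?HH (lift_rel (graph_on H s \<union> graph_on H a) f)"
    using assms(1) a_lift s_lift sa_lift planar by (simp add: graph_on_lift_fun lift_rel_Un)
  have "graph_on H s \<union> graph_on H a \<subseteq> H \<times> H"
    using a assms(2) by (auto simp: bij_betw_def graph_on_def)
  then obtain g where "\<forall>(y, z)\<in>graph_on H s \<union> graph_on H a. g z = (g y \<noteq> f y)"
    by (rule lift_rel_section_exists[OF assms(1) _ le])
  then have "\<forall>y\<in>H. g (s y) = (g y \<noteq> f y) \<and> g (a y) = (g y \<noteq> f y)"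
    by (auto simp: graph_on_def)
  then show ?thesis by (rule that)
qed

section \<open>Counting colourings\<close>

lemma saturated_equivcl:
  assumes "\<forall>(x, y)\<in>R. x \<in> X \<longleftrightarrow> y \<in> X" and "(x, y) \<in> equivcl R"
  shows "x \<in> X \<longleftrightarrow> y \<in> X"
  using assms(2) by (induction rule: equivcl_induct) (use assms(1) in auto)

lemma quotient_equivcl_closed:
  assumes "K \<in> A // equivcl R" and "x \<in> K" and "(x, y) \<in> equivcl R"
  shows "y \<in> K"
proof -
  obtain z where "K = equivcl R `` {z}" using assms(1) by (auto simp: quotient_equivcl)
  then show ?thesis using assms(2,3) equivcl_trans[of z x R y] by simp
qed

lemma inj_on_Union_quotient: "inj_on Union (Pow (A // equivcl R))"
proof -
  have "\<K> \<subseteq> \<K>'"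
    if KQ: "\<K> \<subseteq> A // equivcl R" "\<K>' \<subseteq> A // equivcl R" and U: "\<Union>\<K> = \<Union>\<K>'" for \<K> \<K>'
  proof
    fix K assume K: "K \<in> \<K>"
    then have KQ': "K \<in> A // equivcl R" using KQ(1) by blast
    then obtain x where x: "K = equivcl R `` {x}" unfolding quotient_equivcl by blast
    then have "x \<in> K" by simp
    then obtain K' where K': "K' \<in> \<K>'" "x \<in> K'" using K U by blast
    then have "K' \<in> A // equivcl R" using KQ(2) by blast
    with KQ' have "K = K'"
      using quotient_equivcl_disjoint[of K A R K'] \<open>x \<in> K\<close> \<open>x \<in> K'\<close> by blast
    then show "K \<in> \<K>'" using K' by simp
  qed
  then show ?thesis by (intro inj_onI) (simp add: subset_antisym)
qed

lemma card_saturated_subsets: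
  assumes "finite A" and "R \<subseteq> A \<times> A"
  shows "card {X \<in> Pow A. \<forall>(x, y)\<in>R. x \<in> X \<longleftrightarrow> y \<in> X} = 2 ^ num_components A R"
proof -
  let ?Q = "A // equivcl R"
  have "Union ` Pow ?Q = {X \<in> Pow A. \<forall>(x, y)\<in>R. x \<in> X \<longleftrightarrow> y \<in> X}"
  proof (intro equalityI subsetI)
    fix X assume "X \<in> Union ` Pow ?Q"
    then obtain \<K> where \<K>: "\<K> \<subseteq> ?Q" and X: "X = \<Union>\<K>" by blast
    have "X \<subseteq> A"
      using \<K> equivcl_closed[OF assms(2)] unfolding X quotient_equivcl by blast
    moreover have "x \<in> X \<longleftrightarrow> y \<in> X" if "(x, y) \<in> R" for x y
    proof -
      have "x \<in> K \<longleftrightarrow> y \<in> K" if "K \<in> \<K>" for K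
        using quotient_equivcl_closed[of K A R] \<K> that r_into_equivcl[OF \<open>(x, y) \<in> R\<close>]
          equivcl_sym[OF r_into_equivcl[OF \<open>(x, y) \<in> R\<close>]] by blast
      then show ?thesis unfolding X by blast
    qed
    ultimately show "X \<in> {X \<in> Pow A. \<forall>(x, y)\<in>R. x \<in> X \<longleftrightarrow> y \<in> X}" by auto
  next
    fix X assume X: "X \<in> {X \<in> Pow A. \<forall>(x, y)\<in>R. x \<in> X \<longleftrightarrow> y \<in> X}"
    have "X = \<Union>{K \<in> ?Q. K \<subseteq> X}"
    proof (intro equalityI subsetI)
      fix x assume "x \<in> X"
      moreover have "equivcl R `` {x} \<subseteq> X"
        using saturated_equivcl[of R X x] X \<open>x \<in> X\<close> by auto
      ultimately show "x \<in> \<Union>{K \<in> ?Q. K \<subseteq> X}"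
        using X by (auto simp: quotient_equivcl)
    qed blast
    then show "X \<in> Union ` Pow ?Q" by blast
  qed
  then have "card {X \<in> Pow A. \<forall>(x, y)\<in>R. x \<in> X \<longleftrightarrow> y \<in> X} = card (Pow ?Q)"
    using card_image[OF inj_on_Union_quotient] by metis
  moreover have "finite ?Q" using assms(1) by (simp add: quotient_equivcl)
  ultimately show ?thesis by (simp add: card_Pow num_components_def)
qed

lemma prod_sign_involution_invariant:
  assumes "finite B" and "\<forall>d\<in>B. a d \<in> B \<and> a (a d) = d \<and> a d \<noteq> d \<and> g (a d) = g d"
  shows "(\<Prod>d\<in>B. if g d then -1 else 1 :: 'b::comm_ring_1) = 1"
proof -
  let ?B = "{d \<in> B. g d}"
  have "2 * num_components ?B (graph_on ?B a) = card ?B"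
    using assms by (intro num_components_fixpoint_free_involution) auto
  then have "even (card ?B)" by (metis dvd_triv_left)
  then show ?thesis using assms(1) by (simp add: prod.If_cases Int_def)
qed

lemma prod_of_bool: "finite A \<Longrightarrow> (\<Prod>x\<in>A. of_bool (P x)) = (of_bool (\<forall>x\<in>A. P x) :: 'a::comm_semiring_1)"
  by (induction A rule: finite_induct) auto

lemma sum_Pow_signed_of_bool:
  assumes "finite M"
  shows "(\<Sum>S\<in>Pow M. (-1) ^ card S * of_bool (\<forall>e\<in>M. P e (e \<in> S)))
    = (\<Prod>e\<in>M. of_bool (P e False) - of_bool (P e True) :: 'a::comm_ring_1)"
proof -
  have "of_bool (\<forall>e\<in>M. P e (e \<in> S))
      = (\<Prod>e\<in>S. of_bool (P e True)) * (\<Prod>e\<in>M - S. of_bool (P e False) :: 'a)" if "S \<subseteq> M" for S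
  proof -
    have "P e (e \<in> S) = (if e \<in> S then P e True else P e False)" for e by simp
    then have "(\<forall>e\<in>M. P e (e \<in> S)) \<longleftrightarrow> (\<forall>e\<in>S. P e True) \<and> (\<forall>e\<in>M - S. P e False)"
      using that by auto
    then show ?thesis using that assms by (simp add: prod_of_bool finite_subset)
  qed
  then show ?thesis
    by (simp add: prod_diff_conv_sum[OF assms] mult.assoc)
qed

section \<open>Trivalent maps with a perfect matching\<close>

locale cubic_matched_map =
  fixes H :: "'d set" and alpha :: "'d \<Rightarrow> 'd" and vert :: "'d \<Rightarrow> 'v"
    and sigma :: "'d \<Rightarrow> 'd" and M :: "'d set set"
  assumes half_edge_graph: "half_edge_graph H alpha"
    and trivalent: "trivalent H vert"
    and perfect_matching: "perfect_matching H alpha vert M"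
    and rotation_system: "rotation_system H vert sigma"
begin

lemma finite_H: "finite H"
  using half_edge_graph by (simp add: half_edge_graph_def)

lemma alpha_involution: "\<forall>d\<in>H. alpha d \<in> H \<and> alpha (alpha d) = d \<and> alpha d \<noteq> d"
  using half_edge_graph by (simp add: half_edge_graph_def)

lemma alpha_in: "d \<in> H \<Longrightarrow> alpha d \<in> H"
  and alpha_alpha [simp]: "d \<in> H \<Longrightarrow> alpha (alpha d) = d"
  and alpha_neq: "d \<in> H \<Longrightarrow> alpha d \<noteq> d"
  using alpha_involution by auto

lemma bij_sigma: "bij_betw sigma H H"
  using rotation_system by (simp add: rotation_system_def)

lemma sigma_in: "d \<in> H \<Longrightarrow> sigma d \<in> H"
  using bij_sigma by (auto simp: bij_betw_def)

lemma sigma_orbit: "d \<in> H \<Longrightarrow> {(sigma ^^ n) d | n. True} = darts_at H vert (vert d)"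
  using rotation_system by (simp add: rotation_system_def)

lemma vert_sigma [simp]:
  assumes "d \<in> H"
  shows "vert (sigma d) = vert d"
proof -
  have "sigma d \<in> {(sigma ^^ n) d | n. True}"
    by (metis (mono_tags, lifting) CollectI One_nat_def comp_id funpow.simps funpow_0)
  then have "sigma d \<in> darts_at H vert (vert d)" using sigma_orbit[OF assms] by blast
  then show ?thesis by (simp add: darts_at_def)
qed

lemma sigma_orbit_card: "d \<in> H \<Longrightarrow> card {(sigma ^^ n) d | n. True} = 3"
  using sigma_orbit trivalent by (simp add: trivalent_def)

lemma sigma_neq:
  assumes "d \<in> H"
  shows "sigma d \<noteq> d" and "sigma (sigma d) \<noteq> d" and "sigma (sigma d) \<noteq> sigma d"
proof -
  show ne1: "sigma d \<noteq> d"
  proof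
    assume "sigma d = d"
    then have "(sigma ^^ n) d = d" for n by (induction n) auto
    then have "{(sigma ^^ n) d | n. True} = {d}" by auto
    then show False using sigma_orbit_card[OF assms] by simp
  qed
  show "sigma (sigma d) \<noteq> d"
  proof
    assume "sigma (sigma d) = d"
    then have "(sigma ^^ n) d \<in> {d, sigma d}" for n by (induction n) auto
    then have "card {(sigma ^^ n) d | n. True} \<le> card {d, sigma d}" by (intro card_mono) auto
    moreover have "card {d, sigma d} \<le> 2" by (simp add: card_insert_if)
    ultimately show False using sigma_orbit_card[OF assms] by simp
  qed
  show "sigma (sigma d) \<noteq> sigma d"
    using ne1 bij_sigma assms sigma_in by (metis bij_betw_imp_inj_on inj_onD)
qed

lemma vertex_darts:
  assumes "d \<in> H"
  shows "darts_at H vert (vert d) = {d, sigma d, sigma (sigma d)}"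
    and "sigma (sigma (sigma d)) = d"
proof -
  let ?O = "{(sigma ^^ n) d | n. True}"
  have "finite ?O" using sigma_orbit_card[OF assms] card.infinite by fastforce
  moreover have "{d, sigma d, sigma (sigma d)} \<subseteq> ?O"
    by (auto intro: exI[of _ 0] exI[of _ 1] exI[of _ 2] simp: numeral_2_eq_2)
  moreover have "card {d, sigma d, sigma (sigma d)} = 3" using sigma_neq[OF assms] by auto
  ultimately have O: "?O = {d, sigma d, sigma (sigma d)}"
    using sigma_orbit_card[OF assms] by (metis card_subset_eq)
  then show "darts_at H vert (vert d) = {d, sigma d, sigma (sigma d)}"
    using sigma_orbit[OF assms] by simp
  have "(sigma ^^ 3) d \<in> ?O" by blast
  then have "sigma (sigma (sigma d)) \<in> {d, sigma d, sigma (sigma d)}"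
    unfolding O by (simp add: numeral_3_eq_3)
  moreover have "sigma (sigma (sigma d)) \<noteq> sigma d"
    using sigma_neq(2)[OF assms] bij_sigma assms sigma_in by (metis bij_betw_imp_inj_on inj_onD)
  moreover have "sigma (sigma (sigma d)) \<noteq> sigma (sigma d)"
    using sigma_neq(1)[OF assms] bij_sigma assms sigma_in by (metis bij_betw_imp_inj_on inj_onD)
  ultimately show "sigma (sigma (sigma d)) = d" by blast
qed

lemma graph_edge_eq: "E \<in> graph_edges H alpha \<Longrightarrow> d \<in> E \<Longrightarrow> E = {d, alpha d}"
  by (auto simp: graph_edges_def)

lemma in_Union_graph_edges:
  assumes "F \<subseteq> graph_edges H alpha" and "d \<in> H"
  shows "d \<in> \<Union>F \<longleftrightarrow> {d, alpha d} \<in> F"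
  using assms graph_edge_eq by blast

lemma Union_graph_edges_subset: "F \<subseteq> graph_edges H alpha \<Longrightarrow> \<Union>F \<subseteq> H"
  using alpha_in by (auto simp: graph_edges_def)

lemma matching_edges: "M \<subseteq> graph_edges H alpha"
  using perfect_matching by (simp add: perfect_matching_def)

lemma matched_darts_in: "\<Union>M \<subseteq> H"
  using Union_graph_edges_subset[OF matching_edges] .

lemma matching_edge_eq: "e \<in> M \<Longrightarrow> m \<in> e \<Longrightarrow> e = {m, alpha m}"
  using graph_edge_eq matching_edges by blast

lemma matching_edge_of: "m \<in> \<Union>M \<Longrightarrow> {m, alpha m} \<in> M"
  using matching_edge_eq by blast

lemma alpha_matched: "m \<in> \<Union>M \<Longrightarrow> alpha m \<in> \<Union>M"
  using matching_edge_of by blast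

lemma finite_M: "finite M"
proof -
  have "graph_edges H alpha = (\<lambda>d. {d, alpha d}) ` H" by (auto simp: graph_edges_def)
  then show ?thesis using finite_H matching_edges by (metis finite_imageI finite_subset)
qed

lemma unique_matched_dart:
  assumes "d \<in> H"
  shows "\<exists>!m. m \<in> \<Union>M \<and> vert m = vert d"
proof -
  have "card (darts_at (\<Union>M) vert (vert d)) = 1"
    using perfect_matching assms by (simp add: perfect_matching_def sub_degree_def)
  then obtain m where "darts_at (\<Union>M) vert (vert d) = {m}" by (rule card_1_singletonE)
  then have "m' \<in> \<Union>M \<and> vert m' = vert d \<longleftrightarrow> m' = m" for m'
    by (auto simp: darts_at_def)
  then show ?thesis by (intro ex1I[of _ m]) blast+
qed

definition matched_dart :: "'d \<Rightarrow> 'd" where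
  "matched_dart d = (THE m. m \<in> \<Union>M \<and> vert m = vert d)"

lemma matched_dart: "d \<in> H \<Longrightarrow> matched_dart d \<in> \<Union>M \<and> vert (matched_dart d) = vert d"
  unfolding matched_dart_def by (rule theI'[OF unique_matched_dart])

lemma matched_dart_eq: "d \<in> H \<Longrightarrow> m \<in> \<Union>M \<Longrightarrow> vert m = vert d \<Longrightarrow> matched_dart d = m"
  unfolding matched_dart_def by (rule the1_equality[OF unique_matched_dart]) auto

definition unmatched_darts :: "'d set" where
  "unmatched_darts = H - \<Union>M"

lemma matched_dart_sigma:
  assumes "m \<in> \<Union>M"
  shows "matched_dart (sigma m) = m" and "matched_dart (sigma (sigma m)) = m"
    and "sigma m \<in> unmatched_darts" and "sigma (sigma m) \<in> unmatched_darts"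
proof -
  have m: "m \<in> H" using assms matched_darts_in by blast
  then have H: "sigma m \<in> H" "sigma (sigma m) \<in> H" by (simp_all add: sigma_in)
  show "matched_dart (sigma m) = m" "matched_dart (sigma (sigma m)) = m"
    using matched_dart_eq[OF H(1) assms] matched_dart_eq[OF H(2) assms] m H by simp_all
  have "matched_dart m = m" using matched_dart_eq[OF m assms] by simp
  then have "sigma m \<notin> \<Union>M" "sigma (sigma m) \<notin> \<Union>M"
    using matched_dart_eq[OF m, of "sigma m"] matched_dart_eq[OF m, of "sigma (sigma m)"]
      sigma_neq(1,2)[OF m] m H by auto
  then show "sigma m \<in> unmatched_darts" "sigma (sigma m) \<in> unmatched_darts"
    using H by (auto simp: unmatched_darts_def)
qed

lemma unmatched_dart_cases:
  assumes "d \<in> unmatched_darts"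
  shows "d = sigma (matched_dart d) \<or> d = sigma (sigma (matched_dart d))"
proof -
  have d: "d \<in> H" "d \<notin> \<Union>M" using assms by (auto simp: unmatched_darts_def)
  have m: "matched_dart d \<in> H" using matched_dart[OF d(1)] matched_darts_in by blast
  have "d \<in> darts_at H vert (vert (matched_dart d))"
    using d matched_dart[OF d(1)] by (simp add: darts_at_def)
  then show ?thesis using d matched_dart[OF d(1)] unfolding vertex_darts(1)[OF m] by auto
qed

lemma alpha_unmatched: "d \<in> unmatched_darts \<Longrightarrow> alpha d \<in> unmatched_darts"
  using alpha_matched alpha_in unfolding unmatched_darts_def by (metis DiffE DiffI alpha_alpha)

text \<open>Two-colourings of the unmatched darts, represented by their sets of darts coloured True.\<close>

definition colourings :: "'d set set" where
  "colourings = {X \<in> Pow unmatched_darts. \<forall>d\<in>X. alpha d \<in> X}"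

text \<open>The colouring is constant on the two arcs of the \<open>b\<close>-resolution at \<open>e\<close>, in the
  notation of \<open>res_partner\<close>.\<close>

definition resolution_compatible :: "'d set \<Rightarrow> bool \<Rightarrow> 'd set \<Rightarrow> bool" where
  "resolution_compatible e b X \<longleftrightarrow> (\<forall>m\<in>e.
     (sigma m \<in> X \<longleftrightarrow> (if b then sigma (alpha m) else sigma (sigma (alpha m))) \<in> X) \<and>
     (sigma (sigma m) \<in> X \<longleftrightarrow> (if b then sigma (sigma (alpha m)) else sigma (alpha m)) \<in> X))"

definition separating :: "'d set \<Rightarrow> 'd set \<Rightarrow> bool" where
  "separating e X \<longleftrightarrow> (\<forall>m\<in>e. sigma m \<in> X \<longleftrightarrow> sigma (sigma m) \<notin> X)"

abbreviation res :: "'d set set \<Rightarrow> 'd \<Rightarrow> 'd" where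
  "res S \<equiv> res_partner alpha vert sigma M S"

lemma res_partner_sigma:
  assumes "m \<in> \<Union>M"
  shows "res S (sigma m) = (if {m, alpha m} \<in> S then sigma (alpha m) else sigma (sigma (alpha m)))"
    and "res S (sigma (sigma m))
      = (if {m, alpha m} \<in> S then sigma (sigma (alpha m)) else sigma (alpha m))"
  using matched_dart_sigma(1,2)[OF assms] sigma_neq(3)[of m] assms matched_darts_in
  unfolding res_partner_def Let_def matched_dart_def[symmetric] by auto

definition curve_rel :: "'d set set \<Rightarrow> ('d \<times> 'd) set" where
  "curve_rel S = graph_on unmatched_darts alpha \<union> graph_on unmatched_darts (res S)"

lemma num_curves_eq: "num_curves H alpha vert sigma M S = num_components unmatched_darts (curve_rel S)"
proof -
  have "{(d, alpha d) | d. d \<in> unmatched_darts} \<union> {(alpha d, d) | d. d \<in> unmatched_darts}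
      \<union> {(d, res S d) | d. d \<in> unmatched_darts} \<union> {(res S d, d) | d. d \<in> unmatched_darts}
      = curve_rel S \<union> (curve_rel S)\<inverse>"
    by (auto simp: curve_rel_def graph_on_def)
  then show ?thesis
    unfolding num_curves_def num_components_def equivcl_def Let_def unmatched_darts_def by simp
qed

lemma res_unmatched:
  assumes "d \<in> unmatched_darts"
  shows "res S d \<in> unmatched_darts"
proof -
  have "matched_dart d \<in> \<Union>M" using assms matched_dart by (auto simp: unmatched_darts_def)
  then show ?thesis
    using unmatched_dart_cases[OF assms] res_partner_sigma matched_dart_sigma(3,4) alpha_matched
    by (metis (full_types))
qed

lemma curve_rel_subset: "curve_rel S \<subseteq> unmatched_darts \<times> unmatched_darts"
  using alpha_unmatched res_unmatched by (auto simp: curve_rel_def)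

lemma res_saturated_iff:
  "(\<forall>d\<in>unmatched_darts. d \<in> X \<longleftrightarrow> res S d \<in> X) \<longleftrightarrow> (\<forall>e\<in>M. resolution_compatible e (e \<in> S) X)"
proof
  assume X: "\<forall>d\<in>unmatched_darts. d \<in> X \<longleftrightarrow> res S d \<in> X"
  show "\<forall>e\<in>M. resolution_compatible e (e \<in> S) X"
    unfolding resolution_compatible_def
  proof (intro ballI)
    fix e m assume "e \<in> M" "m \<in> e"
    then have "m \<in> \<Union>M" and "e = {m, alpha m}" using matching_edge_eq by auto
    then show "(sigma m \<in> X \<longleftrightarrow> (if e \<in> S then sigma (alpha m) else sigma (sigma (alpha m))) \<in> X) \<and>
      (sigma (sigma m) \<in> X \<longleftrightarrow> (if e \<in> S then sigma (sigma (alpha m)) else sigma (alpha m)) \<in> X)"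
      using X matched_dart_sigma(3,4) res_partner_sigma by metis
  qed
next
  assume X: "\<forall>e\<in>M. resolution_compatible e (e \<in> S) X"
  show "\<forall>d\<in>unmatched_darts. d \<in> X \<longleftrightarrow> res S d \<in> X"
  proof
    fix d assume d: "d \<in> unmatched_darts"
    define m where "m = matched_dart d"
    have m: "m \<in> \<Union>M" using d matched_dart by (auto simp: m_def unmatched_darts_def)
    then have "resolution_compatible {m, alpha m} ({m, alpha m} \<in> S) X"
      using X matching_edge_of by blast
    then show "d \<in> X \<longleftrightarrow> res S d \<in> X"
      using unmatched_dart_cases[OF d] res_partner_sigma[OF m]
      unfolding resolution_compatible_def m_def[symmetric] by auto
  qed
qed

lemma card_curve_colourings:
  "2 ^ num_curves H alpha vert sigma M S
    = card {X \<in> colourings. \<forall>e\<in>M. resolution_compatible e (e \<in> S) X}"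
proof -
  have "{X \<in> Pow unmatched_darts. \<forall>(x, y)\<in>curve_rel S. x \<in> X \<longleftrightarrow> y \<in> X}
      = {X \<in> colourings. \<forall>e\<in>M. resolution_compatible e (e \<in> S) X}"
  proof (rule set_eqI)
    fix X
    show "X \<in> {X \<in> Pow unmatched_darts. \<forall>(x, y)\<in>curve_rel S. x \<in> X \<longleftrightarrow> y \<in> X}
        \<longleftrightarrow> X \<in> {X \<in> colourings. \<forall>e\<in>M. resolution_compatible e (e \<in> S) X}"
    proof (cases "X \<in> Pow unmatched_darts")
      case True
      then have "(\<forall>d\<in>unmatched_darts. d \<in> X \<longleftrightarrow> alpha d \<in> X) \<longleftrightarrow> (\<forall>d\<in>X. alpha d \<in> X)"
        using alpha_unmatched unmatched_darts_def by fastforce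
      then show ?thesis
        using True res_saturated_iff[of X S] by (auto simp: curve_rel_def graph_on_def colourings_def)
    qed (simp add: colourings_def)
  qed
  moreover have "finite unmatched_darts" using finite_H by (simp add: unmatched_darts_def)
  ultimately show ?thesis
    using card_saturated_subsets[OF _ curve_rel_subset, of S] by (simp add: num_curves_eq)
qed

lemma finite_colourings: "finite colourings"
  using finite_H by (simp add: colourings_def unmatched_darts_def)

lemma bracket_at_one_expansion:
  "two_factor_bracket H alpha vert sigma M 1
    = (\<Sum>X\<in>colourings. \<Prod>e\<in>M. of_bool (resolution_compatible e False X)
                              - of_bool (resolution_compatible e True X))"
proof -
  have "two_factor_bracket H alpha vert sigma M 1
      = (\<Sum>S\<in>Pow M. (-1) ^ card S * 2 ^ num_curves H alpha vert sigma M S)"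
    by (simp add: two_factor_bracket_def)
  also have "\<dots> = (\<Sum>S\<in>Pow M. \<Sum>X\<in>colourings.
      (-1) ^ card S * of_bool (\<forall>e\<in>M. resolution_compatible e (e \<in> S) X))"
  proof (rule sum.cong[OF refl])
    fix S
    have "(2::real) ^ num_curves H alpha vert sigma M S
        = real (card {X \<in> colourings. \<forall>e\<in>M. resolution_compatible e (e \<in> S) X})"
      unfolding card_curve_colourings[symmetric] by simp
    then show "(-1) ^ card S * (2::real) ^ num_curves H alpha vert sigma M S = (\<Sum>X\<in>colourings.
        (-1) ^ card S * of_bool (\<forall>e\<in>M. resolution_compatible e (e \<in> S) X))"
      by (simp add: sum_distrib_left[symmetric] finite_colourings Int_def)
  qed
  also have "\<dots> = (\<Sum>X\<in>colourings. \<Sum>S\<in>Pow M.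
      (-1) ^ card S * of_bool (\<forall>e\<in>M. resolution_compatible e (e \<in> S) X))"
    by (rule sum.swap)
  also have "\<dots> = (\<Sum>X\<in>colourings. \<Prod>e\<in>M. of_bool (resolution_compatible e False X)
                              - of_bool (resolution_compatible e True X))"
    by (intro sum.cong refl sum_Pow_signed_of_bool[OF finite_M, where P = "\<lambda>e b. resolution_compatible e b _"])
  finally show ?thesis .
qed

lemma resolution_factor:
  assumes "e \<in> M"
  shows "of_bool (resolution_compatible e False X) - of_bool (resolution_compatible e True X)
    = (of_bool (separating e X) * (if resolution_compatible e True X then -1 else 1) :: real)"
proof -
  obtain m where m: "m \<in> e" using assms matching_edges by (auto simp: graph_edges_def)
  then have e: "e = {m, alpha m}" and mH: "m \<in> H"
    using matching_edge_eq[OF assms] assms matched_darts_in by auto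
  have "resolution_compatible e b X \<longleftrightarrow>
      (sigma m \<in> X \<longleftrightarrow> (if b then sigma (alpha m) else sigma (sigma (alpha m))) \<in> X) \<and>
      (sigma (sigma m) \<in> X \<longleftrightarrow> (if b then sigma (sigma (alpha m)) else sigma (alpha m)) \<in> X)" for b
    unfolding resolution_compatible_def e using mH by auto
  moreover have "separating e X \<longleftrightarrow> (sigma m \<in> X \<longleftrightarrow> sigma (sigma m) \<notin> X)
      \<and> (sigma (alpha m) \<in> X \<longleftrightarrow> sigma (sigma (alpha m)) \<notin> X)"
    unfolding separating_def e by auto
  ultimately show ?thesis
    by (cases "sigma m \<in> X"; cases "sigma (sigma m) \<in> X"; cases "sigma (alpha m) \<in> X";
        cases "sigma (sigma (alpha m)) \<in> X") simp_all
qed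

lemma bracket_at_one_signed:
  "two_factor_bracket H alpha vert sigma M 1
    = (\<Sum>X\<in>colourings. of_bool (\<forall>e\<in>M. separating e X)
        * (\<Prod>e\<in>M. if resolution_compatible e True X then -1 else 1))"
  unfolding bracket_at_one_expansion
  by (simp add: resolution_factor prod.distrib prod_of_bool finite_M cong: prod.cong)

definition factor_colourings :: "'d set set" where
  "factor_colourings = {X \<in> colourings. \<forall>e\<in>M. separating e X}"

definition colouring_factor :: "'d set \<Rightarrow> 'd set set" where
  "colouring_factor X = M \<union> {{d, alpha d} | d. d \<in> X}"

lemma degree_two_iff:
  assumes "F \<subseteq> graph_edges H alpha" and "m \<in> H" and "m \<in> \<Union>F"
  shows "sub_degree F vert (vert m) = 2 \<longleftrightarrow> (sigma m \<in> \<Union>F \<longleftrightarrow> sigma (sigma m) \<notin> \<Union>F)"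
proof -
  have "darts_at (\<Union>F) vert (vert m) = {m, sigma m, sigma (sigma m)} \<inter> \<Union>F"
    using vertex_darts(1)[OF assms(2)] Union_graph_edges_subset[OF assms(1)]
    by (auto simp: darts_at_def)
  then show ?thesis
    using sigma_neq[OF assms(2)] assms(3) unfolding sub_degree_def
    by (cases "sigma m \<in> \<Union>F"; cases "sigma (sigma m) \<in> \<Union>F") (auto simp: card_insert_if)
qed

lemma vertex_of_matched_dart:
  assumes "v \<in> vert ` H"
  obtains m where "m \<in> \<Union>M" and "v = vert m"
proof -
  obtain d where "d \<in> H" "v = vert d" using assms by blast
  then show ?thesis using matched_dart[of d] that by metis
qed

lemma Union_colouring_factor:
  assumes "X \<in> colourings"
  shows "\<Union>(colouring_factor X) = \<Union>M \<union> X"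
proof -
  have "\<Union>{{d, alpha d} | d. d \<in> X} = X" using assms by (auto simp: colourings_def)
  then show ?thesis by (simp add: colouring_factor_def)
qed

lemma colouring_factor_in:
  assumes "X \<in> factor_colourings"
  shows "colouring_factor X \<in> two_factors_containing H alpha vert M"
proof -
  have X: "X \<in> colourings" and sep: "\<forall>e\<in>M. separating e X"
    using assms by (auto simp: factor_colourings_def)
  have sub: "colouring_factor X \<subseteq> graph_edges H alpha"
    using matching_edges X by (auto simp: colouring_factor_def colourings_def unmatched_darts_def
        graph_edges_def)
  have "sub_degree (colouring_factor X) vert v = 2" if v: "v \<in> vert ` H" for v
  proof -
    obtain m where m: "m \<in> \<Union>M" "v = vert m" by (rule vertex_of_matched_dart[OF v])
    have "separating {m, alpha m} X" using sep matching_edge_of[OF m(1)] by blast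
    then have "sigma m \<in> X \<longleftrightarrow> sigma (sigma m) \<notin> X" by (simp add: separating_def)
    then show ?thesis
      unfolding m(2) using degree_two_iff[OF sub] m(1) matched_darts_in matched_dart_sigma(3,4)[OF m(1)]
      by (auto simp: Union_colouring_factor[OF X] unmatched_darts_def)
  qed
  then show ?thesis
    using sub by (auto simp: two_factors_containing_def colouring_factor_def)
qed

lemma factor_colouring_in:
  assumes "F \<in> two_factors_containing H alpha vert M"
  shows "\<Union>F - \<Union>M \<in> factor_colourings"
proof -
  have F: "F \<subseteq> graph_edges H alpha" "M \<subseteq> F" and deg: "\<forall>v\<in>vert ` H. sub_degree F vert v = 2"
    using assms by (auto simp: two_factors_containing_def)
  have "alpha d \<in> \<Union>F - \<Union>M" if "d \<in> \<Union>F - \<Union>M" for d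
  proof -
    have d: "d \<in> H" using that Union_graph_edges_subset[OF F(1)] by blast
    then have "{alpha d, alpha (alpha d)} \<in> F"
      using that in_Union_graph_edges[OF F(1) d] by (simp add: insert_commute)
    moreover have "alpha d \<notin> \<Union>M" using that alpha_matched d by force
    ultimately show ?thesis by blast
  qed
  then have "\<Union>F - \<Union>M \<in> colourings"
    using Union_graph_edges_subset[OF F(1)] by (auto simp: colourings_def unmatched_darts_def)
  moreover have "separating e (\<Union>F - \<Union>M)" if "e \<in> M" for e
    unfolding separating_def
  proof
    fix m assume "m \<in> e"
    then have m: "m \<in> \<Union>M" "m \<in> H" "m \<in> \<Union>F" using that F(2) matched_darts_in by auto
    then have "sigma m \<in> \<Union>F \<longleftrightarrow> sigma (sigma m) \<notin> \<Union>F"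
      using deg degree_two_iff[OF F(1) m(2,3)] by blast
    then show "sigma m \<in> \<Union>F - \<Union>M \<longleftrightarrow> sigma (sigma m) \<notin> \<Union>F - \<Union>M"
      using matched_dart_sigma(3,4)[OF m(1)] by (simp add: unmatched_darts_def)
  qed
  ultimately show ?thesis by (simp add: factor_colourings_def)
qed

lemma colouring_factor_Union:
  assumes "F \<in> two_factors_containing H alpha vert M"
  shows "colouring_factor (\<Union>F - \<Union>M) = F"
proof -
  have sub: "F \<subseteq> graph_edges H alpha" and MF: "M \<subseteq> F"
    using assms by (auto simp: two_factors_containing_def)
  show ?thesis
  proof (intro equalityI subsetI)
    fix E assume "E \<in> colouring_factor (\<Union>F - \<Union>M)"
    then consider "E \<in> M" | d where "d \<in> \<Union>F" "E = {d, alpha d}"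
      unfolding colouring_factor_def by blast
    then show "E \<in> F"
      using MF in_Union_graph_edges[OF sub] Union_graph_edges_subset[OF sub] by cases blast+
  next
    fix E assume E: "E \<in> F"
    then obtain d where d: "d \<in> H" "E = {d, alpha d}"
      using sub by (auto simp: graph_edges_def)
    show "E \<in> colouring_factor (\<Union>F - \<Union>M)"
    proof (cases "d \<in> \<Union>M")
      case True
      then show ?thesis using matching_edge_of d by (simp add: colouring_factor_def)
    next
      case False
      then show ?thesis using d E unfolding colouring_factor_def by blast
    qed
  qed
qed

lemma card_factor_colourings:
  "card factor_colourings = card (two_factors_containing H alpha vert M)"
proof -
  have "bij_betw colouring_factor factor_colourings (two_factors_containing H alpha vert M)"
  proof (rule bij_betw_byWitness[where f' = "\<lambda>F. \<Union>F - \<Union>M"])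
    show "\<forall>X\<in>factor_colourings. \<Union>(colouring_factor X) - \<Union>M = X"
      by (auto simp: Union_colouring_factor factor_colourings_def colourings_def unmatched_darts_def)
  qed (use colouring_factor_Union colouring_factor_in factor_colouring_in in auto)
  then show ?thesis by (rule bij_betw_same_card)
qed

lemma factor_colouring_separates:
  assumes "X \<in> factor_colourings" and "m \<in> \<Union>M"
  shows "sigma m \<in> X \<longleftrightarrow> sigma (sigma m) \<notin> X"
  using assms matching_edge_of[OF assms(2)] by (simp add: factor_colourings_def separating_def)

lemma factor_darts_alpha:
  assumes "X \<in> factor_colourings" and "y \<in> H"
  shows "alpha y \<in> \<Union>M \<union> X \<longleftrightarrow> y \<in> \<Union>M \<union> X"
proof -
  have "\<forall>d\<in>X. alpha d \<in> X" using assms(1) by (simp add: factor_colourings_def colourings_def)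
  then have "y \<in> X \<longleftrightarrow> alpha y \<in> X" using assms(2) by (metis alpha_alpha)
  moreover have "y \<in> \<Union>M \<longleftrightarrow> alpha y \<in> \<Union>M" using alpha_matched assms(2) by (metis alpha_alpha)
  ultimately show ?thesis by blast
qed

text \<open>At every vertex the two-factor uses the matched dart and exactly one of the other two.\<close>

lemma factor_darts_even:
  assumes "X \<in> factor_colourings" and "y \<in> H"
  shows "((y \<in> \<Union>M \<union> X) \<noteq> (sigma y \<in> \<Union>M \<union> X)) = (sigma (sigma y) \<in> \<Union>M \<union> X)"
proof -
  define m where "m = matched_dart y"
  have m: "m \<in> \<Union>M" "m \<in> H" using matched_dart[OF assms(2)] matched_darts_in by (auto simp: m_def)
  have "y \<in> darts_at H vert (vert m)"
    using matched_dart[OF assms(2)] assms(2) by (simp add: m_def darts_at_def)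
  then have "y = m \<or> y = sigma m \<or> y = sigma (sigma m)" using vertex_darts(1)[OF m(2)] by simp
  moreover have "sigma m \<in> \<Union>M \<union> X \<longleftrightarrow> sigma (sigma m) \<notin> \<Union>M \<union> X"
    using matched_dart_sigma(3,4)[OF m(1)] factor_colouring_separates[OF assms(1) m(1)]
    by (auto simp: unmatched_darts_def)
  ultimately show ?thesis using vertex_darts(2)[OF m(2)] m(1) by (elim disjE) simp_all
qed

definition unused_dart :: "'d set \<Rightarrow> 'd \<Rightarrow> 'd" where
  "unused_dart X m = (if sigma m \<in> X then sigma (sigma m) else sigma m)"

lemma bij_betw_unused_dart:
  assumes "X \<in> factor_colourings"
  shows "bij_betw (unused_dart X) (\<Union>M) (unmatched_darts - X)"
proof (rule bij_betw_imageI)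
  have vert_unused: "vert (unused_dart X m) = vert m" if "m \<in> \<Union>M" for m
    using that matched_darts_in sigma_in by (auto simp: unused_dart_def)
  show "inj_on (unused_dart X) (\<Union>M)"
  proof (rule inj_onI)
    fix m m' assume m: "m \<in> \<Union>M" "m' \<in> \<Union>M" "unused_dart X m = unused_dart X m'"
    then have "vert m' = vert m" using vert_unused by metis
    moreover have "m \<in> H" using m(1) matched_darts_in by blast
    ultimately show "m = m'"
      using matched_dart_eq[of m m'] matched_dart_eq[of m m] m by simp
  qed
  show "unused_dart X ` \<Union>M = unmatched_darts - X"
  proof (intro equalityI subsetI)
    fix d assume "d \<in> unused_dart X ` \<Union>M"
    then obtain m where m: "m \<in> \<Union>M" "d = unused_dart X m" by blast
    show "d \<in> unmatched_darts - X"
    proof (cases "sigma m \<in> X")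
      case True
      then show ?thesis using m matched_dart_sigma(4)[OF m(1)] factor_colouring_separates[OF assms m(1)]
        by (simp add: unused_dart_def)
    next
      case False
      then show ?thesis using m matched_dart_sigma(3)[OF m(1)] by (simp add: unused_dart_def)
    qed
  next
    fix d assume d: "d \<in> unmatched_darts - X"
    then have m: "matched_dart d \<in> \<Union>M" using matched_dart by (auto simp: unmatched_darts_def)
    moreover have "d = unused_dart X (matched_dart d)"
      using d unmatched_dart_cases[of d] factor_colouring_separates[OF assms m]
      unfolding unused_dart_def by auto
    ultimately show "d \<in> unused_dart X ` \<Union>M" by blast
  qed
qed

lemma prod_unused_darts:
  assumes "X \<in> factor_colourings"
  shows "(\<Prod>e\<in>M. \<Prod>m\<in>e. \<phi> (unused_dart X m)) = (\<Prod>d\<in>unmatched_darts - X. \<phi> d)"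
proof -
  have "(\<Prod>e\<in>M. \<Prod>m\<in>e. \<phi> (unused_dart X m)) = (\<Prod>m\<in>\<Union>M. \<phi> (unused_dart X m))"
  proof (rule prod.Union_disjoint[symmetric, unfolded comp_def])
    show "\<forall>e\<in>M. finite e" using matching_edges by (auto simp: graph_edges_def)
    show "\<forall>e\<in>M. \<forall>e'\<in>M. e \<noteq> e' \<longrightarrow> e \<inter> e' = {}" using matching_edge_eq by blast
  qed
  also have "\<dots> = (\<Prod>d\<in>unmatched_darts - X. \<phi> d)"
    by (rule prod.reindex_bij_betw[OF bij_betw_unused_dart[OF assms]])
  finally show ?thesis .
qed

lemma resolution_sign_edge:
  assumes "X \<in> factor_colourings"
    and g: "\<forall>y\<in>H. g (sigma y) = (g y \<noteq> (y \<in> \<Union>M \<union> X)) \<and> g (alpha y) = (g y \<noteq> (y \<in> \<Union>M \<union> X))"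
    and "e \<in> M"
  shows "(if resolution_compatible e True X then -1 else 1)
    = (\<Prod>m\<in>e. if g (unused_dart X m) then -1 else 1 :: real)"
proof -
  obtain m where "m \<in> e" using assms(3) matching_edges by (auto simp: graph_edges_def)
  then have e: "e = {m, alpha m}" and m: "m \<in> \<Union>M" "m \<in> H" "alpha m \<in> \<Union>M"
    using matching_edge_eq[OF assms(3)] assms(3) matched_darts_in alpha_matched by auto
  have unused: "g (unused_dart X n) = (g n = (sigma n \<in> X))" if "n \<in> \<Union>M" for n
  proof -
    have "n \<in> H" "sigma n \<in> H" "sigma n \<notin> \<Union>M"
      using that matched_darts_in sigma_in matched_dart_sigma(3)[OF that]
      by (auto simp: unmatched_darts_def)
    then show ?thesis using g that unfolding unused_dart_def by auto
  qed
  have "resolution_compatible e True X \<longleftrightarrow> (sigma m \<in> X \<longleftrightarrow> sigma (alpha m) \<in> X)"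
    using factor_colouring_separates[OF assms(1) m(1)] factor_colouring_separates[OF assms(1) m(3)] m(2)
    unfolding resolution_compatible_def e by auto
  moreover have "g (alpha m) = (\<not> g m)" using g m by auto
  ultimately show ?thesis
    using unused[OF m(1)] unused[OF m(3)] alpha_neq[OF m(2)] unfolding e by auto
qed

end

section \<open>Planar maps\<close>

locale planar_cubic_matched_map = cubic_matched_map +
  assumes planar: "planar_rotation_system H alpha vert sigma"
begin

lemma num_components_vertices: "card (vert ` H) = num_components H (graph_on H sigma)"
proof -
  have "perm_orbits H sigma = darts_at H vert ` vert ` H"
    using sigma_orbit by (auto simp: perm_orbits_def)
  moreover have "inj_on (darts_at H vert) (vert ` H)"
    by (rule inj_onI) (auto simp: darts_at_def)
  ultimately show ?thesis
    using perm_orbits_eq_quotient[OF finite_H bij_sigma] card_image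
    by (metis num_components_def)
qed

lemma num_components_edges: "2 * card (graph_edges H alpha) = card H"
proof -
  have "graph_edges H alpha = H // equivcl (graph_on H alpha)"
    unfolding quotient_equivcl using involution_class[of H alpha] alpha_involution
    by (auto simp: graph_edges_def)
  then show ?thesis
    using num_components_fixpoint_free_involution[OF finite_H alpha_involution]
    by (simp add: num_components_def)
qed

lemma planar_euler:
  "2 * num_components H (graph_on H sigma) + 2 * num_components H (graph_on H (sigma \<circ> alpha))
    = card H + 4 * num_components H (graph_on H sigma \<union> graph_on H alpha)"
proof -
  have "bij_betw (sigma \<circ> alpha) H H"
    using alpha_involution
    by (intro bij_betw_trans[OF _ bij_sigma] bij_betw_byWitness[of H alpha alpha]) auto
  then have faces:
    "card (perm_orbits H (sigma \<circ> alpha)) = num_components H (graph_on H (sigma \<circ> alpha))"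
    using perm_orbits_eq_quotient[OF finite_H] by (simp add: num_components_def)
  let ?R = "graph_on H sigma \<union> graph_on H alpha"
  have "{(d, alpha d) | d. d \<in> H} \<union> {(alpha d, d) | d. d \<in> H} \<union> {(d, sigma d) | d. d \<in> H}
      \<union> {(sigma d, d) | d. d \<in> H} = ?R \<union> ?R\<inverse>"
    by (auto simp: graph_on_def)
  then have components: "card (map_components H alpha sigma) = num_components H ?R"
    by (simp add: map_components_def num_components_def equivcl_def)
  show ?thesis
    using planar num_components_vertices num_components_edges faces components
    unfolding planar_rotation_system_def by linarith
qed

lemma even_subgraph_face_colouring:
  assumes "\<forall>y\<in>H. f (alpha y) = f y" and "\<forall>y\<in>H. (f y \<noteq> f (sigma y)) = f (sigma (sigma y))"
  obtains g where "\<forall>y\<in>H. g (sigma y) = (g y \<noteq> f y) \<and> g (alpha y) = (g y \<noteq> f y)"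
proof -
  have "\<forall>y\<in>H. (f \<circ> sigma) (sigma y) = ((f \<circ> sigma) y \<noteq> f y)"
  proof
    fix y assume "y \<in> H"
    then have "f (sigma (sigma y)) = (f y \<noteq> f (sigma y))" using assms(2) by simp
    then show "(f \<circ> sigma) (sigma y) = ((f \<circ> sigma) y \<noteq> f y)" by (cases "f y") auto
  qed
  then obtain g where "\<forall>y\<in>H. g (sigma y) = (g y \<noteq> f y) \<and> g (alpha y) = (g y \<noteq> f y)"
    by (rule planar_potential[OF finite_H bij_sigma alpha_involution assms(1) _ planar_euler])
  then show ?thesis by (rule that)
qed

lemma resolution_sign:
  assumes "X \<in> factor_colourings"
  shows "(\<Prod>e\<in>M. if resolution_compatible e True X then -1 else 1 :: real) = 1"
proof -
  obtain g where g: "\<forall>y\<in>H. g (sigma y) = (g y \<noteq> (y \<in> \<Union>M \<union> X))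
      \<and> g (alpha y) = (g y \<noteq> (y \<in> \<Union>M \<union> X))"
    by (rule even_subgraph_face_colouring[where f = "\<lambda>y. y \<in> \<Union>M \<union> X"])
      (use factor_darts_alpha[OF assms] factor_darts_even[OF assms] in auto)
  have "(\<Prod>e\<in>M. if resolution_compatible e True X then -1 else 1)
      = (\<Prod>e\<in>M. \<Prod>m\<in>e. if g (unused_dart X m) then -1 else (1 :: real))"
    using resolution_sign_edge[OF assms g] by (rule prod.cong[OF refl])
  also have "\<dots> = (\<Prod>d\<in>unmatched_darts - X. if g d then -1 else 1)"
    by (rule prod_unused_darts[OF assms])
  also have "\<dots> = 1"
  proof (rule prod_sign_involution_invariant)
    show "finite (unmatched_darts - X)" using finite_H by (simp add: unmatched_darts_def)
    have "\<forall>d\<in>X. alpha d \<in> X" using assms by (simp add: factor_colourings_def colourings_def)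
    then show "\<forall>d\<in>unmatched_darts - X. alpha d \<in> unmatched_darts - X \<and> alpha (alpha d) = d
        \<and> alpha d \<noteq> d \<and> g (alpha d) = g d"
      using g alpha_unmatched alpha_neq by (auto simp: unmatched_darts_def)
  qed
  finally show ?thesis .
qed

lemma bracket_at_one:
  "two_factor_bracket H alpha vert sigma M 1 = real (card (two_factors_containing H alpha vert M))"
proof -
  have "two_factor_bracket H alpha vert sigma M 1
      = (\<Sum>X\<in>colourings. of_bool (\<forall>e\<in>M. separating e X)
          * (\<Prod>e\<in>M. if resolution_compatible e True X then -1 else 1))"
    by (rule bracket_at_one_signed)
  also have "\<dots> = (\<Sum>X\<in>colourings. of_bool (\<forall>e\<in>M. separating e X))"
    using resolution_sign by (intro sum.cong) (auto simp: factor_colourings_def)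
  also have "\<dots> = real (card factor_colourings)"
    using finite_colourings by (simp add: factor_colourings_def Int_def)
  finally show ?thesis by (simp add: card_factor_colourings)
qed

end

theorem theorem1p2:
  fixes H :: "'d set" and alpha :: "'d \<Rightarrow> 'd" and vert :: "'d \<Rightarrow> 'v"
    and sigma :: "'d \<Rightarrow> 'd" and M :: "'d set set"
  assumes "half_edge_graph H alpha"
    and "trivalent H vert"
    and "perfect_matching H alpha vert M"
    and "planar_rotation_system H alpha vert sigma"
  shows "two_factor_bracket H alpha vert sigma M 1
         = real (card (two_factors_containing H alpha vert M))"
proof -
  interpret planar_cubic_matched_map H alpha vert sigma M
    using assms by unfold_locales (simp_all add: planar_rotation_system_def)
  show ?thesis by (rule bracket_at_one)
qed

end
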